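(* Let $n\ge3$, $\delta>0$, and let $F\subset C^2([0,1]^{n-1})$ be a cinematic family (cinematic constant $K$, doubling constant $D$, modulus of continuity $\alpha$). Let $f,g\in F$ with $\|f-g\|_{C^2([0,1]^{n-1})}\in[\delta,1]$. Let $\epsilon>0$, $0<s\le1$, and let $E\subset[0,1]^{n-1}$ be a $(\delta,n-2+s,\delta^{-\epsilon})$-set with $|E|\le\delta^{-(n-2+s)}$. Let $P_{f,g}$ be the orthogonal projection of $f^\delta\cap g^\delta$ onto $[0,1]^{n-1}$ (the first $n-1$ coordinates). Then $$|E\cap P_{f,g}|_\delta\lesssim\delta^{-\epsilon}\frac{\delta^{-(n-2)}}{\|f-g\|^s_{C^2([0,1]^{n-1})}},$$ with implicit constant depending only on $n$ and the parameters of $F$.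
   Context: $|E|$ is cardinality and $|A|_\delta$ the $\delta$-covering number. A bounded set $P\subset\mathbb{R}^{n-1}$ is a $(\delta,\sigma,C)$-set if $|P\cap B(x,r)|_\delta\le Cr^\sigma|P|_\delta$ for all $x$ and $r\ge\delta$. For $f\in C^2([0,1]^{n-1})$, $f^\delta:=\{(x,y)\in[0,1]^{n-1}\times\mathbb{R}:|y-f(x)|\le\delta\}$. Cinematic family: for a domain $U\subset\mathbb{R}^k$, $F\subset C^2(U)$ is a cinematic family with cinematic constant $K$, doubling constant $D$ and modulus of continuity $\alpha$ if: (1) $F$ lies in a ball of diameter $K$ in $C^2(U)$; (2) $F$ is doubling with constant at most $D$; (3) for all $f,g\in F$ and $\xi\in S^{k-1}$, $\inf_{x\in U}\{|f-g|(x)+|\nabla f-\nabla g|(x)+|\nabla_\xi\nabla_\xi(f-g)(x)|\}\ge K^{-1}\|f-g\|_{C^2(U)}$, with $\nabla_\xi\nabla_\xi h=\langle\nabla^2h\,\xi,\xi\rangle$; (4) there is an increasing continuous $\alpha:[0,1]\to[0,\infty)$, $\alpha(0)=0$, $0<\alpha(s)\le K^{-1}s$ for $s\in(0,1]$, such that for all $f,g\in F$, $\xi\in S^{k-1}$, sufficiently small $\eta>0$ and $x,y\in U$ with $|x-y|\le\alpha(\eta)$: $|\nabla_\xi\nabla_\xi(f-g)(x)-\nabla_\xi\nabla_\xi(f-g)(y)|\le\eta$. *)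

theory Defs
  imports "HOL-Analysis.Analysis"
begin

text \<open>The domain [0,1]^(n-1), realised as real^'k with CARD('k) = n - 1.\<close>
definition unit_cube :: "(real^'k::finite) set" where
  "unit_cube = cbox 0 1"

definition grad :: "(real^'k::finite) set \<Rightarrow> (real^'k \<Rightarrow> real) \<Rightarrow> real^'k \<Rightarrow> real^'k" where
  "grad U f x = (SOME v. (f has_derivative (\<lambda>h. v \<bullet> h)) (at x within U))"

definition hess :: "(real^'k::finite) set \<Rightarrow> (real^'k \<Rightarrow> real) \<Rightarrow> real^'k \<Rightarrow> real^'k^'k" where
  "hess U f x = (SOME M. (grad U f has_derivative (\<lambda>h. M *v h)) (at x within U))"

definition C2_on :: "(real^'k::finite) set \<Rightarrow> (real^'k \<Rightarrow> real) \<Rightarrow> bool" where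
  "C2_on U f \<longleftrightarrow>
     (\<forall>x\<in>U. (f has_derivative (\<lambda>h. grad U f x \<bullet> h)) (at x within U)
           \<and> (grad U f has_derivative (\<lambda>h. hess U f x *v h)) (at x within U))
     \<and> continuous_on U (hess U f)"

definition C2_norm :: "(real^'k::finite) set \<Rightarrow> (real^'k \<Rightarrow> real) \<Rightarrow> real" where
  "C2_norm U h = (SUP x\<in>U. \<bar>h x\<bar>) + (SUP x\<in>U. norm (grad U h x))
                 + (SUP x\<in>U. onorm (\<lambda>v. hess U h x *v v))"

definition dd2 :: "(real^'k::finite) set \<Rightarrow> (real^'k \<Rightarrow> real) \<Rightarrow> real^'k \<Rightarrow> real^'k \<Rightarrow> real" where
  "dd2 U h \<xi> x = (hess U h x *v \<xi>) \<bullet> \<xi>"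

definition doubling_with :: "(real^'k::finite) set \<Rightarrow> (real^'k \<Rightarrow> real) set \<Rightarrow> real \<Rightarrow> bool" where
  "doubling_with U F D \<longleftrightarrow>
     (\<forall>f\<in>F. \<forall>r>0. \<exists>G. finite G \<and> G \<subseteq> F \<and> real (card G) \<le> D \<and>
        {g\<in>F. C2_norm U (\<lambda>x. g x - f x) < r}
          \<subseteq> (\<Union>c\<in>G. {g\<in>F. C2_norm U (\<lambda>x. g x - c x) < r / 2}))"

text \<open>Cinematic family on U with cinematic constant K, doubling constant D,
  modulus of continuity \<alpha>; \<eta>0 quantifies "sufficiently small \<eta>".\<close>
definition cinematic :: "(real^'k::finite) set \<Rightarrow> (real^'k \<Rightarrow> real) set \<Rightarrow> real \<Rightarrow> real
    \<Rightarrow> (real \<Rightarrow> real) \<Rightarrow> real \<Rightarrow> bool" where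
  "cinematic U F K D \<alpha> \<eta>0 \<longleftrightarrow>
     K > 0 \<and> (\<forall>f\<in>F. C2_on U f) \<and>
     \<comment> \<open>(1) F lies in a ball of diameter K in C^2(U)\<close>
     (\<exists>f0. C2_on U f0 \<and> (\<forall>f\<in>F. C2_norm U (\<lambda>x. f x - f0 x) < K / 2)) \<and>
     \<comment> \<open>(2) doubling\<close>
     doubling_with U F D \<and>
     \<comment> \<open>(3) non-degeneracy\<close>
     (\<forall>f\<in>F. \<forall>g\<in>F. \<forall>\<xi>. norm \<xi> = 1 \<longrightarrow>
        (INF x\<in>U. \<bar>f x - g x\<bar> + norm (grad U f x - grad U g x)
                    + \<bar>dd2 U (\<lambda>y. f y - g y) \<xi> x\<bar>)
          \<ge> C2_norm U (\<lambda>x. f x - g x) / K) \<and>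
     \<comment> \<open>(4) modulus of continuity\<close>
     mono_on {0..1} \<alpha> \<and> continuous_on {0..1} \<alpha> \<and> \<alpha> 0 = 0 \<and>
     (\<forall>s\<in>{0<..1}. 0 < \<alpha> s \<and> \<alpha> s \<le> s / K) \<and> \<eta>0 > 0 \<and>
     (\<forall>f\<in>F. \<forall>g\<in>F. \<forall>\<xi>. norm \<xi> = 1 \<longrightarrow> (\<forall>\<eta>. 0 < \<eta> \<and> \<eta> \<le> \<eta>0 \<longrightarrow>
        (\<forall>x\<in>U. \<forall>y\<in>U. dist x y \<le> \<alpha> \<eta> \<longrightarrow>
           \<bar>dd2 U (\<lambda>z. f z - g z) \<xi> x - dd2 U (\<lambda>z. f z - g z) \<xi> y\<bar> \<le> \<eta>)))"

definition cov_num :: "real \<Rightarrow> ('a::metric_space) set \<Rightarrow> nat" where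
  "cov_num \<delta> A = (LEAST N. \<exists>G. finite G \<and> card G = N \<and> A \<subseteq> (\<Union>c\<in>G. cball c \<delta>))"

definition delta_sigma_set :: "real \<Rightarrow> real \<Rightarrow> real \<Rightarrow> ('a::metric_space) set \<Rightarrow> bool" where
  "delta_sigma_set \<delta> \<sigma> C P \<longleftrightarrow> bounded P \<and>
     (\<forall>x. \<forall>r\<ge>\<delta>. real (cov_num \<delta> (P \<inter> ball x r)) \<le> C * r powr \<sigma> * real (cov_num \<delta> P))"

definition fnbhd :: "real \<Rightarrow> (real^'k::finite \<Rightarrow> real) \<Rightarrow> ((real^'k) \<times> real) set" where
  "fnbhd \<delta> f = {(x, y). x \<in> unit_cube \<and> \<bar>y - f x\<bar> \<le> \<delta>}"

end

theory Submission
  imports Defs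
begin

text \<open>Write \<open>h = f - g\<close> and \<open>\<lambda> = \<parallel>h\<parallel>\<^sub>C\<^sub>2\<close>; the projection \<open>P\<^sub>f\<^sub>,\<^sub>g\<close> lies in \<open>{\<bar>h\<bar> \<le> 2\<delta>}\<close>.
  Non-degeneracy of the cinematic family says that at every point \<open>\<bar>h\<bar>\<close>, \<open>\<bar>\<nabla>h\<bar>\<close> or a second
  directional derivative of \<open>h\<close> is \<open>\<greatersim> \<lambda>\<close>. Locally, therefore, either \<open>h\<close> grows at rate
  \<open>\<greatersim> \<lambda>\<close> in a fixed direction, or \<open>\<plusminus>h\<close> is strongly convex with constant \<open>\<greatersim> \<lambda>\<close>; in both
  cases \<open>|{\<bar>h\<bar> \<le> t}| \<lesssim> t/\<lambda>\<close>. Consequently a maximal \<open>\<delta>/\<lambda>\<close>-separated subset of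
  \<open>E \<inter> P\<^sub>f\<^sub>,\<^sub>g\<close> has \<open>\<lesssim> (\<lambda>/\<delta>)\<^sup>n\<^sup>-\<^sup>2\<close> points, because disjoint balls of radius
  \<open>\<delta>/(4\<lambda>)\<close> around them fit into \<open>{\<bar>h\<bar> \<le> 3\<delta>}\<close>. By the \<open>(\<delta>, n-2+s)\<close>-set property each
  \<open>\<delta>/\<lambda>\<close>-ball around such a point meets \<open>E\<close> in at most
  \<open>\<delta>\<^sup>-\<^sup>\<epsilon> (\<delta>/\<lambda>)\<^sup>n\<^sup>-\<^sup>2\<^sup>+\<^sup>s \<delta>\<^sup>-\<^sup>(\<^sup>n\<^sup>-\<^sup>2\<^sup>+\<^sup>s\<^sup>)\<close> \<open>\<delta>\<close>-balls, and the product of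
  the two counts is the claimed bound. When \<open>\<lambda> \<lesssim> \<delta>\<close>, the bound on \<open>|E|\<close> alone suffices.\<close>

section \<open>Volumes of cubes and balls\<close>

lemma measure_cube_cart:
  fixes a :: "real^'k"
  assumes "l \<ge> 0"
  shows "measure lebesgue (cbox a (a + l *\<^sub>R 1)) = l ^ CARD('k)"
proof -
  have "a \<in> cbox a (a + l *\<^sub>R 1)"
    using assms by (simp add: mem_box_cart)
  then show ?thesis
    using content_cbox_cart[of a "a + l *\<^sub>R 1"] by auto
qed

lemma cball_subset_cube_cart:
  fixes c :: "real^'k"
  shows "cball c r \<subseteq> cbox (c - r *\<^sub>R 1) (c - r *\<^sub>R 1 + (2*r) *\<^sub>R 1)"
proof
  fix x assume "x \<in> cball c r"
  then have "norm (x - c) \<le> r" by (simp add: dist_norm norm_minus_commute)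
  then have cc: "\<bar>(x - c)$i\<bar> \<le> r" for i using component_le_norm_cart[of "x-c" i] by linarith
  show "x \<in> cbox (c - r *\<^sub>R 1) (c - r *\<^sub>R 1 + (2*r) *\<^sub>R 1)"
    unfolding mem_box_cart
  proof (intro allI conjI)
    fix i
    show "(c - r *\<^sub>R 1) $ i \<le> x $ i" using cc[of i] by (simp add: abs_le_iff)
    show "x $ i \<le> (c - r *\<^sub>R 1 + (2 * r) *\<^sub>R 1) $ i" using cc[of i] by (simp add: abs_le_iff)
  qed
qed

lemma measure_cball_le_cart:
  fixes c :: "real^'k"
  assumes "r \<ge> 0"
  shows "measure lebesgue (cball c r) \<le> (2*r) ^ CARD('k)"
proof -
  have "measure lebesgue (cball c r)
      \<le> measure lebesgue (cbox (c - r *\<^sub>R 1) (c - r *\<^sub>R 1 + (2*r) *\<^sub>R 1))"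
    by (rule measure_mono_fmeasurable) (use cball_subset_cube_cart in auto)
  also have "\<dots> = (2*r) ^ CARD('k)"
    using measure_cube_cart[of "2*r" "c - r *\<^sub>R 1"] assms by simp
  finally show ?thesis .
qed

lemma measure_cball_Int_cball_le:
  fixes c z :: "real^'k"
  assumes "CARD('k) \<ge> 2" "\<rho> \<ge> 0" "R \<ge> 0"
  shows "measure lebesgue (cball c \<rho> \<inter> cball z R) \<le> 4 * \<rho>\<^sup>2 * (2*R) ^ (CARD('k) - 2)"
proof -
  define m where "m = CARD('k)"
  have pow_split: "(2*r) ^ m = (2*r)\<^sup>2 * (2*r) ^ (m - 2)" for r :: real
    using assms(1) unfolding m_def by (metis le_add_diff_inverse power_add)
  show ?thesis
  proof (cases "\<rho> \<le> R")
    case True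
    have "measure lebesgue (cball c \<rho> \<inter> cball z R) \<le> measure lebesgue (cball c \<rho>)"
      by (rule measure_mono_fmeasurable) auto
    also have "\<dots> \<le> (2*\<rho>)\<^sup>2 * (2*\<rho>) ^ (m - 2)"
      using measure_cball_le_cart assms pow_split unfolding m_def by metis
    also have "\<dots> \<le> (2*\<rho>)\<^sup>2 * (2*R) ^ (m - 2)"
      using True assms by (intro mult_left_mono power_mono) auto
    finally show ?thesis by (simp add: m_def power_mult_distrib)
  next
    case False
    have "measure lebesgue (cball c \<rho> \<inter> cball z R) \<le> measure lebesgue (cball z R)"
      by (rule measure_mono_fmeasurable) auto
    also have "\<dots> \<le> (2*R)\<^sup>2 * (2*R) ^ (m - 2)"
      using measure_cball_le_cart assms pow_split unfolding m_def by metis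
    also have "\<dots> \<le> (2*\<rho>)\<^sup>2 * (2*R) ^ (m - 2)"
      using False assms by (intro mult_right_mono power_mono) auto
    finally show ?thesis by (simp add: m_def power_mult_distrib)
  qed
qed

section \<open>Strong convexity from a definite Hessian\<close>

definition strongly_convex_on :: "'a::real_normed_vector set \<Rightarrow> ('a \<Rightarrow> real) \<Rightarrow> real \<Rightarrow> bool" where
  "strongly_convex_on G h a \<longleftrightarrow>
     (\<forall>x\<in>G. \<forall>y\<in>G. \<forall>\<tau>\<in>{0..1}. h ((1 - \<tau>) *\<^sub>R x + \<tau> *\<^sub>R y)
        \<le> (1 - \<tau>) * h x + \<tau> * h y - a / 2 * \<tau> * (1 - \<tau>) * (norm (x - y))\<^sup>2)"

lemma convex_segment_point:
  assumes "convex S" "x \<in> S" "y \<in> S" "s \<in> {0..1::real}"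
  shows "x + s *\<^sub>R (y - x) \<in> S"
proof -
  have "x + s *\<^sub>R (y - x) = (1 - s) *\<^sub>R x + s *\<^sub>R y" by (simp add: algebra_simps)
  then show ?thesis using assms by (auto intro: convexD_alt)
qed

lemma has_derivative_along_segment:
  fixes h :: "'a::real_normed_vector \<Rightarrow> 'b::real_normed_vector"
  assumes "convex S" "x \<in> S" "y \<in> S"
    and der: "\<And>z. z \<in> S \<Longrightarrow> (h has_derivative h' z) (at z within S)"
    and s: "s \<in> {0..1}"
  shows "((\<lambda>s. h (x + s *\<^sub>R (y - x))) has_derivative (\<lambda>d. h' (x + s *\<^sub>R (y - x)) (d *\<^sub>R (y - x))))
           (at s within {0..1})"
proof (rule has_derivative_in_compose2[where g=h and t=S])
  show "z \<in> S \<Longrightarrow> (h has_derivative h' z) (at z within S)" for z using der by blast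
  show "(\<lambda>s. x + s *\<^sub>R (y - x)) ` {0..1} \<subseteq> S" using convex_segment_point[OF assms(1-3)] by auto
  show "((\<lambda>s. x + s *\<^sub>R (y - x)) has_derivative (\<lambda>d. d *\<^sub>R (y - x))) (at s within {0..1})"
    by (auto intro!: derivative_eq_intros)
qed (rule s)

lemma continuous_on_along_segment:
  fixes h :: "'a::real_normed_vector \<Rightarrow> 'b::real_normed_vector"
  assumes "convex S" "x \<in> S" "y \<in> S"
    and der: "\<And>z. z \<in> S \<Longrightarrow> (h has_derivative h' z) (at z within S)"
  shows "continuous_on {0..1} (\<lambda>s. h (x + s *\<^sub>R (y - x)))"
  by (rule has_derivative_continuous_on, rule has_derivative_along_segment[OF assms])

lemma has_real_derivative_along_segment:
  fixes h :: "real^'k \<Rightarrow> real"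
  assumes "convex S" "x \<in> S" "y \<in> S"
    and der: "\<And>z. z \<in> S \<Longrightarrow> (h has_derivative (\<lambda>v. Dh z \<bullet> v)) (at z within S)"
    and s: "0 < s" "s < 1"
  shows "((\<lambda>s. h (x + s *\<^sub>R (y - x))) has_real_derivative (Dh (x + s *\<^sub>R (y - x)) \<bullet> (y - x))) (at s)"
proof -
  have "((\<lambda>s. h (x + s *\<^sub>R (y - x))) has_derivative (\<lambda>d. Dh (x + s *\<^sub>R (y - x)) \<bullet> (d *\<^sub>R (y - x))))
          (at s within {0..1})"
    using has_derivative_along_segment[OF assms(1-3), where h'="\<lambda>z v. Dh z \<bullet> v"] der s by auto
  then have "((\<lambda>s. h (x + s *\<^sub>R (y - x))) has_derivative (\<lambda>d. Dh (x + s *\<^sub>R (y - x)) \<bullet> (d *\<^sub>R (y - x))))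
               (at s)"
    using at_within_Icc_at[of 0 s 1] s by simp
  then show ?thesis
    unfolding has_field_derivative_def by (simp add: mult_commute_abs)
qed

lemma has_real_second_derivative_along_segment:
  fixes Dh :: "real^'k \<Rightarrow> real^'k"
  assumes "convex S" "x \<in> S" "y \<in> S"
    and der: "\<And>z. z \<in> S \<Longrightarrow> (Dh has_derivative (\<lambda>v. Hh z *v v)) (at z within S)"
    and s: "0 < s" "s < 1"
  shows "((\<lambda>s. Dh (x + s *\<^sub>R (y - x)) \<bullet> (y - x))
           has_real_derivative ((Hh (x + s *\<^sub>R (y - x)) *v (y - x)) \<bullet> (y - x))) (at s)"
proof -
  have "((\<lambda>s. Dh (x + s *\<^sub>R (y - x))) has_derivative (\<lambda>d. Hh (x + s *\<^sub>R (y - x)) *v (d *\<^sub>R (y - x))))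
          (at s within {0..1})"
    using has_derivative_along_segment[OF assms(1-3), where h'="\<lambda>z v. Hh z *v v"] der s by auto
  then have "((\<lambda>s. Dh (x + s *\<^sub>R (y - x))) has_derivative (\<lambda>d. Hh (x + s *\<^sub>R (y - x)) *v (d *\<^sub>R (y - x))))
               (at s)"
    using at_within_Icc_at[of 0 s 1] s by simp
  then have "((\<lambda>s. Dh (x + s *\<^sub>R (y - x)) \<bullet> (y - x))
               has_derivative (\<lambda>d. (Hh (x + s *\<^sub>R (y - x)) *v (d *\<^sub>R (y - x))) \<bullet> (y - x))) (at s)"
    by (rule has_derivative_inner_left)
  then show ?thesis
    unfolding has_field_derivative_def by (simp add: matrix_vector_mult_scaleR mult_commute_abs)
qed

lemma MVT_open:
  fixes f f' :: "real \<Rightarrow> real"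
  assumes "a < b" "continuous_on {a..b} f"
    and d: "\<And>s. a < s \<Longrightarrow> s < b \<Longrightarrow> (f has_real_derivative f' s) (at s)"
  shows "\<exists>z. a < z \<and> z < b \<and> f b - f a = (b - a) * f' z"
proof -
  obtain l z where z: "a < z" "z < b" "DERIV f z :> l" "f b - f a = (b - a) * l"
    using MVT[OF assms(1,2)] d by (meson real_differentiable_def)
  have "l = f' z" using DERIV_unique[OF z(3) d[OF z(1,2)]] .
  then show ?thesis using z by blast
qed

lemma strongly_convex_on_interval:
  fixes \<phi> \<phi>' \<phi>'' :: "real \<Rightarrow> real"
  assumes cont: "continuous_on {0..1} \<phi>"
    and d1: "\<And>s. 0 < s \<Longrightarrow> s < 1 \<Longrightarrow> (\<phi> has_real_derivative \<phi>' s) (at s)"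
    and d2: "\<And>s. 0 < s \<Longrightarrow> s < 1 \<Longrightarrow> (\<phi>' has_real_derivative \<phi>'' s) (at s)"
    and c: "\<And>s. 0 < s \<Longrightarrow> s < 1 \<Longrightarrow> \<phi>'' s \<ge> c"
    and t: "0 \<le> t" "t \<le> 1"
  shows "\<phi> t \<le> (1 - t) * \<phi> 0 + t * \<phi> 1 - c / 2 * t * (1 - t)"
proof (cases "t = 0 \<or> t = 1")
  case True then show ?thesis by auto
next
  case False
  then have t': "0 < t" "t < 1" using t by auto
  define \<psi> where "\<psi> s = \<phi> s - c / 2 * s\<^sup>2" for s
  define g where "g s = \<phi>' s - c * s" for s
  have dpsi: "(\<psi> has_real_derivative g s) (at s)" if "0 < s" "s < 1" for s
    unfolding \<psi>_def g_def using d1[OF that]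
    by (auto intro!: derivative_eq_intros simp: power2_eq_square)
  have dg: "(g has_real_derivative (\<phi>'' s - c)) (at s)" if "0 < s" "s < 1" for s
    unfolding g_def using d2[OF that] by (auto intro!: derivative_eq_intros)
  have cpsi: "continuous_on {0..1} \<psi>" unfolding \<psi>_def
    by (intro continuous_intros cont)
  obtain z1 where z1: "0 < z1" "z1 < t" "\<psi> t - \<psi> 0 = (t - 0) * g z1"
    using MVT_open[of 0 t \<psi> g] t' dpsi continuous_on_subset[OF cpsi] by force
  obtain z2 where z2: "t < z2" "z2 < 1" "\<psi> 1 - \<psi> t = (1 - t) * g z2"
    using MVT_open[of t 1 \<psi> g] t' dpsi continuous_on_subset[OF cpsi] by force
  have "g z1 \<le> g z2"
  proof (rule DERIV_nonneg_imp_increasing_open[of z1 z2 g])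
    show "z1 \<le> z2" using z1 z2 by simp
    show "\<exists>y. DERIV g x :> y \<and> 0 \<le> y" if "z1 < x" "x < z2" for x
      using dg[of x] c[of x] that z1 z2 by force
    show "continuous_on {z1..z2} g"
    proof (rule DERIV_continuous_on[where D="\<lambda>s. \<phi>'' s - c"])
      fix x assume "x \<in> {z1..z2}"
      then have "0 < x" "x < 1" using z1 z2 by auto
      then show "(g has_real_derivative \<phi>'' x - c) (at x within {z1..z2})"
        using dg has_field_derivative_at_within by blast
    qed
  qed
  then have "(1 - t) * (\<psi> t - \<psi> 0) \<le> t * (\<psi> 1 - \<psi> t)"
    using z1 z2 t' by (simp add: mult_left_mono mult.assoc[symmetric] mult.commute[of "1-t"])
  then have "\<psi> t \<le> (1 - t) * \<psi> 0 + t * \<psi> 1" by (simp add: algebra_simps)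
  then show ?thesis
    unfolding \<psi>_def by (simp add: algebra_simps power2_eq_square add_divide_distrib diff_divide_distrib)
qed

lemma quadratic_form_ge_norm_square:
  fixes A :: "real^'k^'k"
  assumes "\<And>\<xi>. norm \<xi> = 1 \<Longrightarrow> (A *v \<xi>) \<bullet> \<xi> \<ge> a"
  shows "(A *v v) \<bullet> v \<ge> a * (norm v)\<^sup>2"
proof (cases "v = 0")
  case True then show ?thesis by simp
next
  case False
  define \<xi> where "\<xi> = (1 / norm v) *\<^sub>R v"
  have n: "norm \<xi> = 1" unfolding \<xi>_def using False by simp
  have v: "v = norm v *\<^sub>R \<xi>" unfolding \<xi>_def using False by simp
  have "(A *v v) \<bullet> v = (norm v)\<^sup>2 * ((A *v \<xi>) \<bullet> \<xi>)"
    by (subst (1 2) v) (simp add: matrix_vector_mult_scaleR power2_eq_square)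
  also have "\<dots> \<ge> (norm v)\<^sup>2 * a" using assms[OF n] by (intro mult_left_mono) auto
  finally show ?thesis by (simp add: mult.commute)
qed

lemma strongly_convex_on_hessian:
  fixes h :: "real^'k \<Rightarrow> real"
  assumes G: "convex G"
    and d1: "\<And>x. x \<in> G \<Longrightarrow> (h has_derivative (\<lambda>v. Dh x \<bullet> v)) (at x within G)"
    and d2: "\<And>x. x \<in> G \<Longrightarrow> (Dh has_derivative (\<lambda>v. Hh x *v v)) (at x within G)"
    and pos: "\<And>y \<xi>. y \<in> G \<Longrightarrow> norm \<xi> = 1 \<Longrightarrow> (Hh y *v \<xi>) \<bullet> \<xi> \<ge> a"
  shows "strongly_convex_on G h a"
  unfolding strongly_convex_on_def
proof (intro ballI)
  fix x y \<tau> assume x: "x \<in> G" and y: "y \<in> G" and t: "\<tau> \<in> {0..1::real}"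
  define \<phi> where "\<phi> s = h (x + s *\<^sub>R (y - x))" for s
  have "\<phi> \<tau> \<le> (1 - \<tau>) * \<phi> 0 + \<tau> * \<phi> 1 - (a * (norm (y - x))\<^sup>2) / 2 * \<tau> * (1 - \<tau>)"
  proof (rule strongly_convex_on_interval[where \<phi>' = "\<lambda>s. Dh (x + s *\<^sub>R (y - x)) \<bullet> (y - x)"
                           and \<phi>'' = "\<lambda>s. (Hh (x + s *\<^sub>R (y - x)) *v (y - x)) \<bullet> (y - x)"])
    show "continuous_on {0..1} \<phi>"
      unfolding \<phi>_def by (rule continuous_on_along_segment[OF G x y d1])
    show "(\<phi> has_real_derivative Dh (x + s *\<^sub>R (y - x)) \<bullet> (y - x)) (at s)" if "0 < s" "s < 1" for s
      unfolding \<phi>_def by (rule has_real_derivative_along_segment[OF G x y d1 that])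
    show "((\<lambda>s. Dh (x + s *\<^sub>R (y - x)) \<bullet> (y - x))
           has_real_derivative (Hh (x + s *\<^sub>R (y - x)) *v (y - x)) \<bullet> (y - x)) (at s)"
      if "0 < s" "s < 1" for s
      by (rule has_real_second_derivative_along_segment[OF G x y d2 that])
    show "a * (norm (y - x))\<^sup>2 \<le> (Hh (x + s *\<^sub>R (y - x)) *v (y - x)) \<bullet> (y - x)" if "0 < s" "s < 1" for s
      using quadratic_form_ge_norm_square[OF pos] convex_segment_point[OF G x y, of s] that by auto
  qed (use t in auto)
  moreover have "(1 - \<tau>) *\<^sub>R x + \<tau> *\<^sub>R y = x + \<tau> *\<^sub>R (y - x)" by (simp add: algebra_simps)
  ultimately show "h ((1 - \<tau>) *\<^sub>R x + \<tau> *\<^sub>R y)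
      \<le> (1 - \<tau>) * h x + \<tau> * h y - a / 2 * \<tau> * (1 - \<tau>) * (norm (x - y))\<^sup>2"
    unfolding \<phi>_def by (simp add: norm_minus_commute mult_ac)
qed

lemma strongly_convex_on_quadratic_growth:
  assumes sc: "strongly_convex_on G h a" and cvx: "convex G" and xs: "xs \<in> G" and y: "y \<in> G"
    and mn: "\<And>y. y \<in> G \<Longrightarrow> h xs \<le> h y"
  shows "h y \<ge> h xs + a / 2 * (norm (y - xs))\<^sup>2"
proof -
  have "z * (a / 2 * (norm (y - xs))\<^sup>2) \<le> h y - h xs" if z: "0 < z" "z < 1" for z
  proof -
    define \<tau> where "\<tau> = 1 - z"
    have t: "0 < \<tau>" "\<tau> < 1" using z \<tau>_def by auto
    have "(1 - \<tau>) *\<^sub>R xs + \<tau> *\<^sub>R y \<in> G" using cvx xs y t by (auto intro: convexD_alt)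
    then have "h xs \<le> h ((1 - \<tau>) *\<^sub>R xs + \<tau> *\<^sub>R y)" by (rule mn)
    also have "\<dots> \<le> (1 - \<tau>) * h xs + \<tau> * h y - a / 2 * \<tau> * (1 - \<tau>) * (norm (xs - y))\<^sup>2"
      using sc xs y t unfolding strongly_convex_on_def by auto
    finally have "\<tau> * (a / 2 * (1 - \<tau>) * (norm (xs - y))\<^sup>2) \<le> \<tau> * (h y - h xs)"
      by (simp add: algebra_simps)
    then have "a / 2 * (1 - \<tau>) * (norm (xs - y))\<^sup>2 \<le> h y - h xs"
      using t by simp
    then show ?thesis using \<tau>_def by (simp add: norm_minus_commute algebra_simps)
  qed
  then have "a / 2 * (norm (y - xs))\<^sup>2 \<le> h y - h xs" by (rule field_le_mult_one_interval)
  then show ?thesis by simp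
qed

section \<open>Sublevel sets of strongly convex functions\<close>

lemma power_minus_one_le:
  fixes k :: real
  assumes "k \<ge> 1"
  shows "k ^ n - 1 \<le> n * k ^ n * (k - 1)"
proof (induction n)
  case 0 then show ?case by simp
next
  case (Suc n)
  have "k ^ Suc n - 1 = k * (k ^ n - 1) + (k - 1)" by (simp add: algebra_simps)
  also have "\<dots> \<le> k * (n * k ^ n * (k - 1)) + k ^ Suc n * (k - 1)"
  proof (rule add_mono)
    show "k * (k ^ n - 1) \<le> k * (n * k ^ n * (k - 1))"
      using Suc assms by (intro mult_left_mono) auto
    show "k - 1 \<le> k ^ Suc n * (k - 1)"
      using mult_right_mono[OF one_le_power[OF assms], of "k-1" "Suc n"] assms by simp
  qed
  also have "\<dots> = Suc n * k ^ Suc n * (k - 1)" by (simp add: algebra_simps)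
  finally show ?case .
qed

lemma compact_sublevel:
  fixes h :: "'a::heine_borel \<Rightarrow> real"
  assumes "compact G" "continuous_on G h"
  shows "compact {y \<in> G. h y \<le> u}"
proof -
  have eq: "{y \<in> G. h y \<le> u} = G \<inter> h -` {..u}" by auto
  have "closed (G \<inter> h -` {..u})"
    by (rule continuous_closed_preimage[OF assms(2) compact_imp_closed[OF assms(1)]]) simp
  moreover have "bounded (G \<inter> h -` {..u})"
    using compact_imp_bounded[OF assms(1)] bounded_subset by blast
  ultimately show ?thesis unfolding eq by (simp add: compact_eq_bounded_closed)
qed

lemma compact_abs_sublevel:
  fixes h :: "'a::heine_borel \<Rightarrow> real"
  assumes "compact G" "continuous_on G h"
  shows "compact {y \<in> G. \<bar>h y\<bar> \<le> u}"
  using compact_sublevel[OF assms(1), of "\<lambda>y. \<bar>h y\<bar>"] assms(2)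
  by (auto intro: continuous_intros)

lemma lmeasurable_abs_sublevel:
  fixes h :: "'a::euclidean_space \<Rightarrow> real"
  assumes "compact G" "continuous_on G h"
  shows "{y \<in> G. \<bar>h y\<bar> \<le> u} \<in> lmeasurable"
  by (rule lmeasurable_compact[OF compact_abs_sublevel[OF assms]])

lemma strongly_convex_on_imp_convex_on:
  assumes "strongly_convex_on G h a" "a \<ge> 0" "convex G"
  shows "convex_on G h"
proof (rule convex_onI[OF _ assms(3)])
  fix t :: real and x y assume t: "0 < t" "t < 1" and xy: "x \<in> G" "y \<in> G"
  have "0 \<le> a / 2 * t * (1 - t) * (norm (x - y))\<^sup>2"
    using assms(2) t by simp
  moreover have "h ((1 - t) *\<^sub>R x + t *\<^sub>R y) \<le> (1 - t) * h x + t * h y - a / 2 * t * (1 - t) * (norm (x - y))\<^sup>2"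
    using assms(1) xy t unfolding strongly_convex_on_def by auto
  ultimately show "h ((1 - t) *\<^sub>R x + t *\<^sub>R y) \<le> (1 - t) * h x + t * h y"
    by linarith
qed

lemma convex_on_sublevel_subset_dilation:
  fixes h :: "'a::real_vector \<Rightarrow> real"
  assumes cvx: "convex_on G h" and xs: "xs \<in> G" "h xs = - D0"
    and t: "t > 0" and D0: "D0 > 2 * t"
  defines "\<kappa> \<equiv> (D0 + t) / (D0 - 2 * t)"
  shows "{y \<in> G. h y \<le> t} \<subseteq> (\<lambda>y. \<kappa> *\<^sub>R y + (1 - \<kappa>) *\<^sub>R xs) ` {y \<in> G. h y \<le> - 2 * t}"
proof
  fix y assume y: "y \<in> {y \<in> G. h y \<le> t}"
  have k1: "\<kappa> \<ge> 1" unfolding \<kappa>_def using D0 t by (simp add: field_simps)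
  define y' where "y' = (1 - 1/\<kappa>) *\<^sub>R xs + (1/\<kappa>) *\<^sub>R y"
  have ik: "0 \<le> 1/\<kappa>" "1/\<kappa> \<le> 1" using k1 by auto
  have yG: "y \<in> G" using y by simp
  have "convex G" using cvx by (simp add: convex_on_def)
  then have y'G: "y' \<in> G"
    unfolding y'_def by (rule convexD_alt[OF _ xs(1) yG ik])
  have "h y' \<le> (1 - 1/\<kappa>) * h xs + (1/\<kappa>) * h y"
    unfolding y'_def by (rule convex_onD[OF cvx ik xs(1) yG])
  also have "\<dots> \<le> (1 - 1/\<kappa>) * (- D0) + (1/\<kappa>) * t"
    using y ik xs(2) by (intro add_mono mult_left_mono) auto
  also have "\<dots> = - 2 * t"
  proof -
    have "(1/\<kappa>) * (D0 + t) = D0 - 2 * t" unfolding \<kappa>_def using D0 t by simp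
    moreover have "(1 - 1/\<kappa>) * (- D0) + (1/\<kappa>) * t = - D0 + (1/\<kappa>) * (D0 + t)"
      by (simp add: algebra_simps add_divide_distrib)
    ultimately show ?thesis by linarith
  qed
  finally have "y' \<in> {y \<in> G. h y \<le> - 2 * t}" using y'G by auto
  moreover have "\<kappa> *\<^sub>R y' + (1 - \<kappa>) *\<^sub>R xs = y"
  proof -
    have "\<kappa> *\<^sub>R y' = (\<kappa> * (1 - 1/\<kappa>)) *\<^sub>R xs + (\<kappa> * (1/\<kappa>)) *\<^sub>R y"
      unfolding y'_def by (simp add: scaleR_add_right)
    also have "\<dots> = (\<kappa> - 1) *\<^sub>R xs + y"
      using k1 by (simp add: right_diff_distrib)
    finally show ?thesis by (simp add: algebra_simps)
  qed
  ultimately show "y \<in> (\<lambda>y. \<kappa> *\<^sub>R y + (1 - \<kappa>) *\<^sub>R xs) ` {y \<in> G. h y \<le> - 2 * t}"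
    by (intro image_eqI[where x = y']) auto
qed

lemma strongly_convex_sublevel_subset_cball:
  assumes sc: "strongly_convex_on G h a" and G: "convex G"
    and xs: "xs \<in> G" "\<And>y. y \<in> G \<Longrightarrow> h xs \<le> h y" and a: "a > 0"
  shows "{y \<in> G. h y \<le> u} \<subseteq> cball xs (sqrt (2 * (u - h xs) / a))"
proof
  fix y assume y: "y \<in> {y \<in> G. h y \<le> u}"
  then have "h xs + a / 2 * (norm (y - xs))\<^sup>2 \<le> u"
    using strongly_convex_on_quadratic_growth[OF sc G xs(1) _ xs(2)] by fastforce
  then have "(norm (y - xs))\<^sup>2 \<le> 2 * (u - h xs) / a"
    using a by (simp add: field_simps)
  then show "y \<in> cball xs (sqrt (2 * (u - h xs) / a))"
    by (simp add: real_le_rsqrt dist_norm norm_minus_commute)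
qed

text \<open>The set lies in the shell \<open>{-2t < h \<le> t}\<close>, and a dilation by \<open>\<kappa> = 1 + O(t/D\<^sub>0)\<close>
  about the minimiser maps the inner sublevel set onto a superset of the outer one.\<close>
lemma strongly_convex_abs_sublevel_measure_deep_min:
  fixes h :: "real^'k \<Rightarrow> real"
  assumes m2: "CARD('k) \<ge> 2"
    and G: "compact G" "convex G" "G \<subseteq> cball z R" and hc: "continuous_on G h"
    and sc: "strongly_convex_on G h a" and a: "a > 0" and t: "t > 0"
    and xs: "xs \<in> G" "\<And>y. y \<in> G \<Longrightarrow> h xs \<le> h y" and deep: "h xs \<le> - 4 * t"
  shows "measure lebesgue {y \<in> G. \<bar>h y\<bar> \<le> t}
           \<le> 48 * real CARD('k) * 3 ^ CARD('k) * (t / a) * (2*R) ^ (CARD('k) - 2)"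
proof -
  define m where "m = CARD('k)"
  define P where "P = (2*R) ^ (m - 2)"
  define D0 where "D0 = - h xs"
  define \<kappa> where "\<kappa> = (D0 + t) / (D0 - 2 * t)"
  define S1 where "S1 = {y \<in> G. h y \<le> t}"
  define S2 where "S2 = {y \<in> G. h y \<le> - 2 * t}"
  define T where "T y = \<kappa> *\<^sub>R y + (1 - \<kappa>) *\<^sub>R xs" for y
  have D0: "D0 \<ge> 4 * t" using deep unfolding D0_def by simp
  then have D0p: "D0 - 2 * t > 0" "D0 > 0" using t by auto
  have k1: "\<kappa> \<ge> 1" and k3: "\<kappa> \<le> 3" and km1: "\<kappa> - 1 \<le> 6 * t / D0"
    unfolding \<kappa>_def using D0p t D0 by (simp_all add: field_simps)
  have R0: "R \<ge> 0" using G(3) xs(1) by (meson mem_cball subsetD zero_le_dist order_trans)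
  have S1c: "compact S1" and S2c: "compact S2"
    unfolding S1_def S2_def by (intro compact_sublevel[OF G(1) hc])+
  have S1T: "S1 \<subseteq> T ` S2"
    unfolding S1_def S2_def T_def \<kappa>_def
  proof (rule convex_on_sublevel_subset_dilation[OF _ xs(1) _ t])
    show "convex_on G h" using strongly_convex_on_imp_convex_on[OF sc _ G(2)] a by simp
  qed (use D0p in \<open>simp_all add: D0_def\<close>)
  have TS2c: "compact (T ` S2)" unfolding T_def
    by (intro compact_continuous_image S2c continuous_intros)
  have muT: "measure lebesgue (T ` S2) = \<kappa> ^ m * measure lebesgue S2"
    using measure_lebesgue_affine[of \<kappa> "(1 - \<kappa>) *\<^sub>R xs" S2] k1 unfolding T_def m_def by simp
  have "S2 \<subseteq> cball xs (sqrt (2 * (- 2 * t - h xs) / a))"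
    unfolding S2_def by (rule strongly_convex_sublevel_subset_cball[OF sc G(2) xs a])
  moreover have "sqrt (2 * (- 2 * t - h xs) / a) \<le> sqrt (2 * D0 / a)"
    using t a unfolding D0_def by (intro real_sqrt_le_mono divide_right_mono) auto
  ultimately have "S2 \<subseteq> cball xs (sqrt (2 * D0 / a))"
    using subset_cball by blast
  moreover have "S2 \<subseteq> cball z R" using G(3) unfolding S2_def by blast
  ultimately have "S2 \<subseteq> cball xs (sqrt (2 * D0 / a)) \<inter> cball z R" by blast
  then have "measure lebesgue S2 \<le> measure lebesgue (cball xs (sqrt (2 * D0 / a)) \<inter> cball z R)"
    using lmeasurable_compact[OF S2c] by (intro measure_mono_fmeasurable) (auto intro: fmeasurableD)
  also have "\<dots> \<le> 4 * (sqrt (2 * D0 / a))\<^sup>2 * P"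
    unfolding P_def m_def by (rule measure_cball_Int_cball_le[OF m2 _ R0]) (use D0p a in simp)
  also have "\<dots> = 8 * D0 / a * P" using D0p a by simp
  finally have S2m: "measure lebesgue S2 \<le> 8 * D0 / a * P" .
  have "measure lebesgue {y \<in> G. \<bar>h y\<bar> \<le> t} \<le> measure lebesgue (S1 - S2)"
    using S1c S2c t lmeasurable_abs_sublevel[OF G(1) hc] unfolding S1_def S2_def
    by (intro measure_mono_fmeasurable) (auto intro: lmeasurable_compact fmeasurableD)
  also have "\<dots> = measure lebesgue S1 - measure lebesgue S2"
    using lmeasurable_compact[OF S1c] lmeasurable_compact[OF S2c] t unfolding S1_def S2_def
    by (intro measure_Diff) (auto simp: fmeasurable_def)
  also have "\<dots> \<le> (\<kappa> ^ m - 1) * measure lebesgue S2"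
  proof -
    have "measure lebesgue S1 \<le> measure lebesgue (T ` S2)"
      using S1T S1c TS2c by (meson measure_mono_fmeasurable lmeasurable_compact fmeasurableD)
    then show ?thesis using muT by (simp add: algebra_simps)
  qed
  also have "\<dots> \<le> (m * \<kappa> ^ m * (\<kappa> - 1)) * measure lebesgue S2"
    by (intro mult_right_mono power_minus_one_le k1) auto
  also have "\<dots> \<le> (real m * 3 ^ m * (6 * t / D0)) * (8 * D0 / a * P)"
  proof -
    have "real m * \<kappa> ^ m \<le> real m * 3 ^ m"
      using k1 k3 by (intro mult_left_mono power_mono) auto
    then have "real m * \<kappa> ^ m * (\<kappa> - 1) \<le> real m * 3 ^ m * (6 * t / D0)"
      using mult_mono[OF _ km1] k1 by simp
    moreover have "0 \<le> real m * 3 ^ m * (6 * t / D0)" using t D0p by simp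
    ultimately show ?thesis by (rule mult_mono[OF _ S2m]) simp
  qed
  also have "\<dots> = 48 * real m * 3 ^ m * (t / a) * P" using D0p a by (simp add: field_simps)
  finally show ?thesis unfolding m_def P_def .
qed

lemma strongly_convex_abs_sublevel_measure:
  fixes h :: "real^'k \<Rightarrow> real"
  assumes m2: "CARD('k) \<ge> 2"
    and G: "compact G" "convex G" "G \<noteq> {}" "G \<subseteq> cball z R" and hc: "continuous_on G h"
    and sc: "strongly_convex_on G h a" and a: "a > 0" and t: "t > 0"
  shows "measure lebesgue {y \<in> G. \<bar>h y\<bar> \<le> t}
           \<le> (48 * real CARD('k) * 3 ^ CARD('k) + 40) * (t / a) * (2*R) ^ (CARD('k) - 2)"
proof -
  define P where "P = (2*R) ^ (CARD('k) - 2)"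
  have R0: "R \<ge> 0" using G(3,4) by auto
  then have P0: "P \<ge> 0" unfolding P_def by simp
  obtain xs where xs: "xs \<in> G" "\<And>y. y \<in> G \<Longrightarrow> h xs \<le> h y"
    using continuous_attains_inf[OF G(1) G(3) hc] by blast
  show ?thesis
  proof (cases "h xs \<le> - 4 * t")
    case True
    have "measure lebesgue {y \<in> G. \<bar>h y\<bar> \<le> t} \<le> 48 * real CARD('k) * 3 ^ CARD('k) * (t / a) * P"
      unfolding P_def
      by (rule strongly_convex_abs_sublevel_measure_deep_min[OF m2 G(1,2,4) hc sc a t xs True])
    also have "\<dots> \<le> (48 * real CARD('k) * 3 ^ CARD('k) + 40) * (t / a) * P"
      using t a P0 by (intro mult_right_mono) auto
    finally show ?thesis unfolding P_def .
  next
    case False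
    define \<rho> where "\<rho> = sqrt (10 * t / a)"
    have "{y \<in> G. h y \<le> t} \<subseteq> cball xs (sqrt (2 * (t - h xs) / a))"
      by (rule strongly_convex_sublevel_subset_cball[OF sc G(2) xs a])
    moreover have "sqrt (2 * (t - h xs) / a) \<le> \<rho>"
      using False a unfolding \<rho>_def by (intro real_sqrt_le_mono divide_right_mono) auto
    ultimately have "{y \<in> G. h y \<le> t} \<subseteq> cball xs \<rho>"
      using subset_cball by blast
    then have "{y \<in> G. \<bar>h y\<bar> \<le> t} \<subseteq> cball xs \<rho> \<inter> cball z R"
      using G(4) by auto
    then have "measure lebesgue {y \<in> G. \<bar>h y\<bar> \<le> t} \<le> measure lebesgue (cball xs \<rho> \<inter> cball z R)"
      using lmeasurable_abs_sublevel[OF G(1) hc] by (intro measure_mono_fmeasurable) (auto intro: fmeasurableD)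
    also have "\<dots> \<le> 4 * \<rho>\<^sup>2 * P"
      unfolding P_def by (rule measure_cball_Int_cball_le[OF m2 _ R0]) (use a t in \<open>simp add: \<rho>_def\<close>)
    also have "\<dots> = 40 * (t / a) * P" unfolding \<rho>_def using a t by simp
    also have "\<dots> \<le> (48 * real CARD('k) * 3 ^ CARD('k) + 40) * (t / a) * P"
      using t a P0 by (intro mult_right_mono) auto
    finally show ?thesis unfolding P_def .
  qed
qed

section \<open>Sublevel sets of non-degenerate \<open>C\<^sup>2\<close> functions\<close>

text \<open>The translates of \<open>{\<bar>h\<bar> \<le> t}\<close> by multiples of \<open>3t/b\<close> along \<open>u\<close> are pairwise
  disjoint, and about \<open>\<rho>b/t\<close> of them fit in a ball of radius \<open>2\<rho>\<close>.\<close>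
lemma abs_sublevel_measure_of_directional_growth:
  fixes h :: "real^'k \<Rightarrow> real"
  assumes B: "compact B" "B \<subseteq> cball c \<rho>"
    and hc: "continuous_on B h"
    and u: "norm u = 1" and b: "b > 0" and t: "t > 0" and tr: "3 * t / b \<le> \<rho>"
    and grow: "\<And>x s. x \<in> B \<Longrightarrow> s \<ge> 0 \<Longrightarrow> x + s *\<^sub>R u \<in> B \<Longrightarrow> h (x + s *\<^sub>R u) - h x \<ge> b * s"
  shows "measure lebesgue {y \<in> B. \<bar>h y\<bar> \<le> t} \<le> 6 * 4 ^ CARD('k) * \<rho> ^ (CARD('k) - 1) * (t / b)"
proof -
  define W where "W = {y \<in> B. \<bar>h y\<bar> \<le> t}"
  define \<tau> where "\<tau> = 3 * t / b"
  define m where "m = CARD('k)"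
  define J where "J = nat \<lfloor>\<rho> / \<tau>\<rfloor>"
  define T where "T j = (+) ((real j * \<tau>) *\<^sub>R u) ` W" for j :: nat
  have tau0: "\<tau> > 0" unfolding \<tau>_def using t b by simp
  have rho0: "\<rho> > 0" using tau0 tr \<tau>_def by simp
  have x1: "\<rho> / \<tau> \<ge> 1" using tr tau0 by (simp add: \<tau>_def[symmetric])
  have Jge: "real J \<ge> \<rho> / \<tau> / 2" and Jle: "real J * \<tau> \<le> \<rho>"
  proof -
    have fl: "(1::real) \<le> of_int \<lfloor>\<rho> / \<tau>\<rfloor>" using x1 by (simp add: le_floor_iff)
    then have RJ: "real J = of_int \<lfloor>\<rho> / \<tau>\<rfloor>" unfolding J_def by simp
    have lo: "\<rho> / \<tau> - 1 < of_int \<lfloor>\<rho> / \<tau>\<rfloor>" and hi: "of_int \<lfloor>\<rho> / \<tau>\<rfloor> \<le> \<rho> / \<tau>"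
      by linarith+
    have half: "q / 2 \<le> F" if "1 \<le> F" "q - 1 < F" for q F :: real
      using that by linarith
    show "real J \<ge> \<rho> / \<tau> / 2" unfolding RJ by (rule half[OF fl lo])
    have "real J \<le> \<rho> / \<tau>" using RJ hi by linarith
    then show "real J * \<tau> \<le> \<rho>" using tau0 by (simp add: pos_le_divide_eq)
  qed
  have Wc: "compact W" unfolding W_def by (rule compact_abs_sublevel[OF B(1) hc])
  have Tc: "compact (T j)" for j unfolding T_def
    by (intro compact_continuous_image Wc continuous_intros)
  have Tm: "measure lebesgue (T j) = measure lebesgue W" for j
    unfolding T_def by (rule measure_translation)
  have far: False if "w1 \<in> W" "w2 \<in> W" "(real j * \<tau>) *\<^sub>R u + w1 = (real k * \<tau>) *\<^sub>R u + w2" "j < k"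
    for j k w1 w2
  proof -
    define s where "s = (real k - real j) * \<tau>"
    have s0: "s \<ge> \<tau>" unfolding s_def using that(4) tau0
      by (simp add: mult_right_mono[of 1 "real k - real j" \<tau>, simplified] less_imp_le)
    have "w1 = w2 + s *\<^sub>R u" using that(3) unfolding s_def
      by (simp add: algebra_simps scaleR_diff_left)
    then have "h w1 - h w2 \<ge> b * s" using grow[of w2 s] that(1,2) s0 tau0 unfolding W_def by auto
    moreover have "b * s \<ge> 3 * t" using s0 b unfolding \<tau>_def by (simp add: field_simps)
    moreover have "\<bar>h w1\<bar> \<le> t" "\<bar>h w2\<bar> \<le> t" using that(1,2) unfolding W_def by auto
    ultimately show False using t by linarith
  qed
  have disj: "disjoint_family_on T {..<J}"
    unfolding disjoint_family_on_def T_def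
    by (auto simp: neq_iff dest: far far[OF _ _ sym])
  have Tsub: "T j \<subseteq> cball c (2 * \<rho>)" if "j < J" for j
  proof
    fix x assume "x \<in> T j"
    then obtain w where w: "w \<in> W" "x = (real j * \<tau>) *\<^sub>R u + w" unfolding T_def by auto
    have "dist c w \<le> \<rho>" using w(1) B(2) unfolding W_def by auto
    moreover have "real j * \<tau> \<le> \<rho>" using Jle that tau0
      by (meson less_imp_le mult_right_mono of_nat_le_iff order_trans less_imp_le_nat)
    moreover have "dist w x = real j * \<tau>" using w(2) u tau0 by (simp add: dist_norm)
    ultimately show "x \<in> cball c (2 * \<rho>)" using dist_triangle[of c x w] by simp
  qed
  have "real J * measure lebesgue W = (\<Sum>j<J. measure lebesgue (T j))" by (simp add: Tm)
  also have "\<dots> = measure lebesgue (\<Union>j<J. T j)"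
  proof (rule measure_finite_Union[symmetric, OF _ _ disj])
    show "T ` {..<J} \<subseteq> sets lebesgue" using Tc lmeasurable_compact fmeasurableD by blast
    show "emeasure lebesgue (T j) \<noteq> \<infinity>" for j
      using lmeasurable_compact[OF Tc[of j]] unfolding fmeasurable_def by auto
  qed simp
  also have "\<dots> \<le> measure lebesgue (cball c (2 * \<rho>))"
  proof (rule measure_mono_fmeasurable)
    show "(\<Union>j<J. T j) \<subseteq> cball c (2 * \<rho>)" using Tsub by blast
    show "(\<Union>j<J. T j) \<in> sets lebesgue" using Tc lmeasurable_compact fmeasurableD by blast
  qed simp
  also have "\<dots> \<le> (4 * \<rho>) ^ m" unfolding m_def using measure_cball_le_cart[of "2 * \<rho>"] rho0 by simp
  finally have JW: "real J * measure lebesgue W \<le> (4 * \<rho>) ^ m" .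
  have "\<rho> / \<tau> / 2 * measure lebesgue W \<le> real J * measure lebesgue W"
    using Jge by (intro mult_right_mono) auto
  then have "\<rho> / \<tau> / 2 * measure lebesgue W \<le> (4 * \<rho>) ^ m" using JW by linarith
  then have "measure lebesgue W \<le> (4 * \<rho>) ^ m * (2 * \<tau> / \<rho>)"
    using rho0 tau0 by (simp add: field_simps)
  also have "\<dots> = 4 ^ m * \<rho> ^ (m - 1) * (2 * \<tau>)"
  proof -
    have m1: "m = Suc (m - 1)" unfolding m_def by simp
    show ?thesis using rho0 by (subst m1, subst m1) (simp add: power_mult_distrib field_simps)
  qed
  also have "\<dots> = 6 * 4 ^ m * \<rho> ^ (m - 1) * (t / b)" unfolding \<tau>_def by (simp add: field_simps)
  finally show ?thesis unfolding W_def m_def .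
qed

lemma connected_abs_ge_imp_same_sign:
  fixes f :: "'a::topological_space \<Rightarrow> real"
  assumes "connected G" "continuous_on G f" "a > 0" "\<And>y. y \<in> G \<Longrightarrow> \<bar>f y\<bar> \<ge> a"
  shows "(\<forall>y\<in>G. f y \<ge> a) \<or> (\<forall>y\<in>G. f y \<le> - a)"
proof (rule ccontr)
  assume "\<not> ?thesis"
  then obtain y1 y2 where y: "y1 \<in> G" "y2 \<in> G" "f y1 < a" "f y2 > - a" by force
  have y1: "f y1 \<le> - a" using assms(4)[OF y(1)] y(3) by linarith
  have y2: "f y2 \<ge> a" using assms(4)[OF y(2)] y(4) by linarith
  have "connected (f ` G)" by (rule connected_continuous_image[OF assms(2,1)])
  then have iv: "\<forall>x\<in>f ` G. \<forall>y\<in>f ` G. \<forall>z. x \<le> z \<longrightarrow> z \<le> y \<longrightarrow> z \<in> f ` G"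
    using connected_iff_interval by blast
  have "0 \<in> f ` G"
    by (rule iv[rule_format, of "f y1" "f y2"]) (use y y1 y2 assms(3) in auto)
  then obtain y0 where "y0 \<in> G" "f y0 = 0" by auto
  then show False using assms(3) assms(4)[of y0] by simp
qed

lemma continuous_on_quadratic_form:
  fixes H :: "'a::euclidean_space \<Rightarrow> real^'k^'k"
  assumes "continuous_on G H"
  shows "continuous_on G (\<lambda>y. (H y *v \<xi>) \<bullet> \<xi>)"
proof -
  have "linear (\<lambda>A::real^'k^'k. A *v \<xi>)"
    by (rule linearI) (simp_all add: matrix_vector_mult_add_rdistrib scaleR_matrix_vector_assoc[symmetric])
  then have "continuous_on G (\<lambda>y. H y *v \<xi>)"
    by (rule linear_continuous_on_compose[OF assms])
  then show ?thesis by (intro continuous_intros)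
qed

text \<open>By connectedness of \<open>G\<close> and of the unit sphere; the latter needs \<open>CARD('k) \<ge> 2\<close>.\<close>
lemma quadratic_forms_uniformly_definite:
  fixes H :: "'a::euclidean_space \<Rightarrow> real^'k^'k"
  assumes m2: "CARD('k) \<ge> 2" and G: "connected G" and Hc: "continuous_on G H" and a: "a > 0"
    and lb: "\<And>y \<xi>. y \<in> G \<Longrightarrow> norm \<xi> = 1 \<Longrightarrow> \<bar>(H y *v \<xi>) \<bullet> \<xi>\<bar> \<ge> a"
  shows "(\<forall>y\<in>G. \<forall>\<xi>. norm \<xi> = 1 \<longrightarrow> (H y *v \<xi>) \<bullet> \<xi> \<ge> a) \<or>
         (\<forall>y\<in>G. \<forall>\<xi>. norm \<xi> = 1 \<longrightarrow> (H y *v \<xi>) \<bullet> \<xi> \<le> - a)"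
proof -
  obtain \<xi>0 :: "real^'k" where \<xi>0: "norm \<xi>0 = 1" using vector_choose_size[of 1] by auto
  have sph: "connected (sphere (0::real^'k) 1)" using m2 by (intro connected_sphere) simp
  have pointwise: "(\<forall>\<xi>. norm \<xi> = 1 \<longrightarrow> (H y *v \<xi>) \<bullet> \<xi> \<ge> a) \<or> (\<forall>\<xi>. norm \<xi> = 1 \<longrightarrow> (H y *v \<xi>) \<bullet> \<xi> \<le> - a)"
    if y: "y \<in> G" for y
  proof -
    have "(\<forall>\<xi>\<in>sphere 0 1. (H y *v \<xi>) \<bullet> \<xi> \<ge> a) \<or> (\<forall>\<xi>\<in>sphere 0 1. (H y *v \<xi>) \<bullet> \<xi> \<le> - a)"
      by (rule connected_abs_ge_imp_same_sign[OF sph _ a]) (auto intro!: continuous_intros lb[OF y])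
    then show ?thesis by auto
  qed
  have "(\<forall>y\<in>G. (H y *v \<xi>0) \<bullet> \<xi>0 \<ge> a) \<or> (\<forall>y\<in>G. (H y *v \<xi>0) \<bullet> \<xi>0 \<le> - a)"
    by (rule connected_abs_ge_imp_same_sign[OF G continuous_on_quadratic_form[OF Hc] a]) (rule lb[OF _ \<xi>0])
  then show ?thesis
  proof
    assume "\<forall>y\<in>G. (H y *v \<xi>0) \<bullet> \<xi>0 \<ge> a"
    then have "\<forall>y\<in>G. \<forall>\<xi>. norm \<xi> = 1 \<longrightarrow> (H y *v \<xi>) \<bullet> \<xi> \<ge> a"
      using pointwise \<xi>0 a by force
    then show ?thesis by blast
  next
    assume "\<forall>y\<in>G. (H y *v \<xi>0) \<bullet> \<xi>0 \<le> - a"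
    then have "\<forall>y\<in>G. \<forall>\<xi>. norm \<xi> = 1 \<longrightarrow> (H y *v \<xi>) \<bullet> \<xi> \<le> - a"
      using pointwise \<xi>0 a by force
    then show ?thesis by blast
  qed
qed

definition C2_bounded :: "(real^'k) set \<Rightarrow> (real^'k \<Rightarrow> real) \<Rightarrow> (real^'k \<Rightarrow> real^'k)
    \<Rightarrow> (real^'k \<Rightarrow> real^'k^'k) \<Rightarrow> real \<Rightarrow> bool" where
  "C2_bounded S h Dh Hh L \<longleftrightarrow>
     (\<forall>x\<in>S. (h has_derivative (\<lambda>v. Dh x \<bullet> v)) (at x within S)) \<and>
     (\<forall>x\<in>S. (Dh has_derivative (\<lambda>v. Hh x *v v)) (at x within S)) \<and> continuous_on S Hh \<and>
     (\<forall>x\<in>S. \<bar>h x\<bar> \<le> L \<and> norm (Dh x) \<le> L \<and> onorm (\<lambda>v. Hh x *v v) \<le> L)"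

lemma C2_bounded_subset:
  assumes "C2_bounded S h Dh Hh L" "T \<subseteq> S"
  shows "\<And>x. x \<in> T \<Longrightarrow> (h has_derivative (\<lambda>v. Dh x \<bullet> v)) (at x within T)"
    and "\<And>x. x \<in> T \<Longrightarrow> (Dh has_derivative (\<lambda>v. Hh x *v v)) (at x within T)"
    and "continuous_on T h" and "continuous_on T Hh"
proof -
  show d1: "(h has_derivative (\<lambda>v. Dh x \<bullet> v)) (at x within T)" if "x \<in> T" for x
    using assms that unfolding C2_bounded_def by (meson has_derivative_subset subsetD)
  show "(Dh has_derivative (\<lambda>v. Hh x *v v)) (at x within T)" if "x \<in> T" for x
    using assms that unfolding C2_bounded_def by (meson has_derivative_subset subsetD)
  show "continuous_on T h" using d1 by (rule has_derivative_continuous_on)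
  show "continuous_on T Hh" using assms unfolding C2_bounded_def by (meson continuous_on_subset)
qed

lemma C2_bounded_lipschitz:
  assumes "C2_bounded S h Dh Hh L" "convex S" "x \<in> S" "y \<in> S"
  shows "\<bar>h x - h y\<bar> \<le> L * norm (x - y)"
proof -
  have "norm (h x - h y) \<le> L * norm (x - y)"
  proof (rule differentiable_bound[OF assms(2) _ _ assms(3,4)])
    show "(h has_derivative (\<lambda>v. Dh z \<bullet> v)) (at z within S)" if "z \<in> S" for z
      using assms(1) that unfolding C2_bounded_def by blast
    show "onorm (\<lambda>v. Dh z \<bullet> v) \<le> L" if "z \<in> S" for z
    proof (rule onorm_le)
      fix v
      have "norm (Dh z \<bullet> v) \<le> norm (Dh z) * norm v" by (simp add: Cauchy_Schwarz_ineq2)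
      also have "\<dots> \<le> L * norm v"
        using assms(1) that unfolding C2_bounded_def by (intro mult_right_mono) auto
      finally show "norm (Dh z \<bullet> v) \<le> L * norm v" .
    qed
  qed
  then show ?thesis by simp
qed

lemma C2_bounded_grad_lipschitz:
  assumes "C2_bounded S h Dh Hh L" "convex S" "x \<in> S" "y \<in> S"
  shows "norm (Dh x - Dh y) \<le> L * norm (x - y)"
proof (rule differentiable_bound[OF assms(2) _ _ assms(3,4)])
  show "(Dh has_derivative (\<lambda>v. Hh z *v v)) (at z within S)" if "z \<in> S" for z
    using assms(1) that unfolding C2_bounded_def by blast
  show "onorm (\<lambda>v. Hh z *v v) \<le> L" if "z \<in> S" for z
    using assms(1) that unfolding C2_bounded_def by blast
qed

lemma convex_compact_unit_cube: "convex (unit_cube :: (real^'k) set)" "compact (unit_cube :: (real^'k) set)"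
  unfolding unit_cube_def by auto

text \<open>Near a point where the gradient is large, it stays large along the fixed direction
  \<open>u = Dh z / |Dh z|\<close> on a ball of radius \<open>1/(32K)\<close>.\<close>
lemma abs_sublevel_measure_large_gradient:
  fixes h :: "real^'k \<Rightarrow> real"
  assumes reg: "C2_bounded unit_cube h Dh Hh L" and K: "K > 0" and L: "L > 0"
    and t: "t > 0" "t \<le> L / (1536 * K\<^sup>2)"
    and z: "z \<in> cball c (1/(32*K))" "z \<in> unit_cube" and Dz: "norm (Dh z) \<ge> L / (8*K)"
  shows "measure lebesgue {y \<in> cball c (1/(32*K)) \<inter> unit_cube. \<bar>h y\<bar> \<le> t}
           \<le> 6 * 4 ^ CARD('k) * (1/(32*K)) ^ (CARD('k) - 1) * (16 * K) * (t / L)"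
proof -
  define \<rho> where "\<rho> = 1/(32*K)"
  define b where "b = L/(16*K)"
  define Bc where "Bc = cball c \<rho> \<inter> unit_cube"
  define u where "u = (1 / norm (Dh z)) *\<^sub>R Dh z"
  have Q: "convex (unit_cube :: (real^'k) set)" using convex_compact_unit_cube by blast
  have Bcc: "convex Bc" "compact Bc"
    unfolding Bc_def unit_cube_def by (auto intro: convex_Int compact_Int_closed)
  have b0: "b > 0" unfolding b_def using L K by simp
  have "L / (8*K) > 0" using L K by simp
  then have nDz: "norm (Dh z) > 0" using Dz by linarith
  have u1: "norm u = 1" unfolding u_def using nDz by simp
  have Dzu: "Dh z \<bullet> u = norm (Dh z)" unfolding u_def using nDz
    by (simp add: power2_norm_eq_inner[symmetric] power2_eq_square)
  have Du: "Dh y \<bullet> u \<ge> b" if y: "y \<in> Bc" for y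
  proof -
    have yQ: "y \<in> unit_cube" and yc: "dist c y \<le> \<rho>" using y unfolding Bc_def by auto
    have "dist c z \<le> \<rho>" using z(1) unfolding \<rho>_def by simp
    then have "norm (y - z) \<le> 2 * \<rho>"
      using yc dist_triangle[of y z c] by (simp add: dist_norm norm_minus_commute)
    have "\<bar>(Dh y - Dh z) \<bullet> u\<bar> \<le> norm (Dh y - Dh z)"
      using Cauchy_Schwarz_ineq2[of "Dh y - Dh z" u] u1 by simp
    also have "\<dots> \<le> L * norm (y - z)" by (rule C2_bounded_grad_lipschitz[OF reg Q yQ z(2)])
    also have "\<dots> \<le> L * (2 * \<rho>)" using \<open>norm (y - z) \<le> 2 * \<rho>\<close> L by (intro mult_left_mono) auto
    also have "\<dots> = b" unfolding b_def \<rho>_def using K by (simp add: field_simps)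
    finally have "\<bar>(Dh y - Dh z) \<bullet> u\<bar> \<le> b" .
    moreover have "Dh y \<bullet> u = Dh z \<bullet> u + (Dh y - Dh z) \<bullet> u" by (simp add: inner_diff_left)
    moreover have "2 * b \<le> norm (Dh z)" using Dz unfolding b_def by simp
    ultimately show ?thesis using Dzu by linarith
  qed
  have BQ: "Bc \<subseteq> unit_cube" unfolding Bc_def by blast
  note d1 = C2_bounded_subset(1)[OF reg BQ] and hc = C2_bounded_subset(3)[OF reg BQ]
  have grow: "h (x + s *\<^sub>R u) - h x \<ge> b * s"
    if x: "x \<in> Bc" and s: "s \<ge> 0" and xs: "x + s *\<^sub>R u \<in> Bc" for x s
  proof -
    define y where "y = x + s *\<^sub>R u"
    have y: "y \<in> Bc" using xs unfolding y_def .
    obtain \<xi> where \<xi>: "0 < \<xi>" "\<xi> < 1"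
      "h (x + 1 *\<^sub>R (y - x)) - h (x + 0 *\<^sub>R (y - x)) = (1 - 0) * (Dh (x + \<xi> *\<^sub>R (y - x)) \<bullet> (y - x))"
      using MVT_open[of 0 1 "\<lambda>s. h (x + s *\<^sub>R (y - x))" "\<lambda>s. Dh (x + s *\<^sub>R (y - x)) \<bullet> (y - x)"]
        continuous_on_along_segment[OF Bcc(1) x y d1]
        has_real_derivative_along_segment[OF Bcc(1) x y d1] by auto
    have "x + \<xi> *\<^sub>R (y - x) \<in> Bc" using convex_segment_point[OF Bcc(1) x y, of \<xi>] \<xi> by auto
    then have "s * b \<le> s * (Dh (x + \<xi> *\<^sub>R (y - x)) \<bullet> u)" using Du s by (intro mult_left_mono) auto
    also have "\<dots> = h y - h x" using \<xi>(3) unfolding y_def by simp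
    finally show ?thesis unfolding y_def by (simp add: mult.commute)
  qed
  have "measure lebesgue {y \<in> Bc. \<bar>h y\<bar> \<le> t} \<le> 6 * 4 ^ CARD('k) * \<rho> ^ (CARD('k) - 1) * (t / b)"
  proof (rule abs_sublevel_measure_of_directional_growth[OF Bcc(2) _ hc u1 b0 t(1) _ grow])
    show "Bc \<subseteq> cball c \<rho>" unfolding Bc_def by auto
    show "3 * t / b \<le> \<rho>" unfolding b_def \<rho>_def using t K L by (simp add: field_simps power2_eq_square)
  qed
  also have "\<dots> = 6 * 4 ^ CARD('k) * \<rho> ^ (CARD('k) - 1) * (16 * K) * (t / L)"
    unfolding b_def using K L by (simp add: field_simps)
  finally show ?thesis unfolding Bc_def \<rho>_def .
qed

lemma uminus_matrix_vector_mult: "(- A) *v v = - (A *v v)"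
  for A :: "real^'n^'m"
  by (simp add: matrix_vector_mult_def vec_eq_iff sum_negf)

text \<open>Near a point where \<open>h\<close> and its gradient are small, non-degeneracy forces the Hessian to be
  definite, so \<open>\<plusminus>h\<close> is strongly convex there.\<close>
lemma abs_sublevel_measure_small_gradient:
  fixes h :: "real^'k \<Rightarrow> real"
  assumes m2: "CARD('k) \<ge> 2" and reg: "C2_bounded unit_cube h Dh Hh L" and K: "K > 0" and L: "L > 0"
    and nd: "\<And>x \<xi>. x \<in> unit_cube \<Longrightarrow> norm \<xi> = 1 \<Longrightarrow> L / K \<le> \<bar>h x\<bar> + norm (Dh x) + \<bar>(Hh x *v \<xi>) \<bullet> \<xi>\<bar>"
    and t: "t > 0" "t \<le> L / (16 * K)"
    and z: "z \<in> unit_cube" "\<bar>h z\<bar> \<le> t" and Dz: "norm (Dh z) < L / (8*K)"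
  shows "measure lebesgue {y \<in> cball z (1/(8*K)) \<inter> unit_cube. \<bar>h y\<bar> \<le> t}
           \<le> (48 * real CARD('k) * 3 ^ CARD('k) + 40) * (2 * K) * (2 * (1/(8*K))) ^ (CARD('k) - 2) * (t / L)"
proof -
  define R where "R = 1/(8*K)"
  define a where "a = L/(2*K)"
  define G where "G = cball z R \<inter> unit_cube"
  have Q: "convex (unit_cube :: (real^'k) set)" using convex_compact_unit_cube by blast
  have G: "compact G" "convex G" "G \<noteq> {}" "G \<subseteq> cball z R"
  proof -
    have "z \<in> G" unfolding G_def R_def using K z by simp
    then show "G \<noteq> {}" by blast
    show "compact G" "convex G" "G \<subseteq> cball z R"
      unfolding G_def unit_cube_def by (auto intro: convex_Int compact_Int_closed)
  qed
  have GQ: "G \<subseteq> unit_cube" unfolding G_def by auto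
  note d1 = C2_bounded_subset(1)[OF reg GQ] and d2 = C2_bounded_subset(2)[OF reg GQ]
    and hc = C2_bounded_subset(3)[OF reg GQ] and Hc = C2_bounded_subset(4)[OF reg GQ]
  have a0: "a > 0" unfolding a_def using L K by simp
  have big: "\<bar>(Hh y *v \<xi>) \<bullet> \<xi>\<bar> \<ge> a" if y: "y \<in> G" and \<xi>: "norm \<xi> = 1" for y \<xi>
  proof -
    have yQ: "y \<in> unit_cube" and yz: "norm (y - z) \<le> R" using y unfolding G_def
      by (auto simp: dist_norm norm_minus_commute)
    have "\<bar>h y - h z\<bar> \<le> L * norm (y - z)" by (rule C2_bounded_lipschitz[OF reg Q yQ z(1)])
    also have "\<dots> \<le> L * R" using yz L by (intro mult_left_mono) auto
    finally have h1: "\<bar>h y\<bar> \<le> t + L * R" using z(2) by linarith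
    have "norm (Dh y - Dh z) \<le> L * norm (y - z)" by (rule C2_bounded_grad_lipschitz[OF reg Q yQ z(1)])
    also have "\<dots> \<le> L * R" using yz L by (intro mult_left_mono) auto
    finally have h2: "norm (Dh y) \<le> L / (8*K) + L * R"
      using Dz norm_triangle_ineq2[of "Dh y" "Dh z"] by linarith
    have "t + L * R + (L / (8*K) + L * R) \<le> 7 * L / (16 * K)"
      using t(2) unfolding R_def using K by (simp add: field_simps)
    moreover have "L / K - 7 * L / (16 * K) \<ge> a" unfolding a_def using K L by (simp add: field_simps)
    ultimately show ?thesis using h1 h2 nd[OF yQ \<xi>] by linarith
  qed
  have "measure lebesgue {y \<in> G. \<bar>h y\<bar> \<le> t}
          \<le> (48 * real CARD('k) * 3 ^ CARD('k) + 40) * (t / a) * (2*R) ^ (CARD('k) - 2)"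
    using quadratic_forms_uniformly_definite[OF m2 convex_connected[OF G(2)] Hc a0 big]
  proof
    assume "\<forall>y\<in>G. \<forall>\<xi>. norm \<xi> = 1 \<longrightarrow> (Hh y *v \<xi>) \<bullet> \<xi> \<ge> a"
    then have "strongly_convex_on G h a"
      using strongly_convex_on_hessian[OF G(2) d1 d2] by blast
    then show ?thesis by (rule strongly_convex_abs_sublevel_measure[OF m2 G hc _ a0 t(1)])
  next
    assume neg: "\<forall>y\<in>G. \<forall>\<xi>. norm \<xi> = 1 \<longrightarrow> (Hh y *v \<xi>) \<bullet> \<xi> \<le> - a"
    have "strongly_convex_on G (\<lambda>y. - h y) a"
    proof (intro strongly_convex_on_hessian[OF G(2), where Dh = "\<lambda>x. - Dh x" and Hh = "\<lambda>x. - Hh x"])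
      show "((\<lambda>y. - h y) has_derivative (\<lambda>v. - Dh x \<bullet> v)) (at x within G)" if "x \<in> G" for x
        using has_derivative_minus[OF d1[OF that]] by simp
      show "((\<lambda>x. - Dh x) has_derivative (\<lambda>v. - Hh x *v v)) (at x within G)" if "x \<in> G" for x
        using has_derivative_minus[OF d2[OF that]] by (simp add: uminus_matrix_vector_mult)
    next
      fix y \<xi> :: "real^'k" assume "y \<in> G" "norm \<xi> = 1"
      then show "(- Hh y *v \<xi>) \<bullet> \<xi> \<ge> a"
        using neg by (fastforce simp: uminus_matrix_vector_mult)
    qed
    then have "measure lebesgue {y \<in> G. \<bar>- h y\<bar> \<le> t}
        \<le> (48 * real CARD('k) * 3 ^ CARD('k) + 40) * (t / a) * (2*R) ^ (CARD('k) - 2)"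
      by (intro strongly_convex_abs_sublevel_measure[OF m2 G _ _ a0 t(1)] continuous_intros hc)
    then show ?thesis by simp
  qed
  also have "\<dots> = (48 * real CARD('k) * 3 ^ CARD('k) + 40) * (2 * K) * (2 * R) ^ (CARD('k) - 2) * (t / L)"
    unfolding a_def using K L by (simp add: field_simps)
  finally show ?thesis unfolding G_def R_def .
qed

lemma abs_sublevel_measure_local:
  fixes h :: "real^'k \<Rightarrow> real"
  assumes m2: "CARD('k) \<ge> 2" and reg: "C2_bounded unit_cube h Dh Hh L" and K: "K > 0" and L: "L > 0"
    and nd: "\<And>x \<xi>. x \<in> unit_cube \<Longrightarrow> norm \<xi> = 1 \<Longrightarrow> L / K \<le> \<bar>h x\<bar> + norm (Dh x) + \<bar>(Hh x *v \<xi>) \<bullet> \<xi>\<bar>"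
    and t: "t > 0" "t \<le> L / (1536 * K\<^sup>2)" "t \<le> L / (16 * K)"
  shows "measure lebesgue {y \<in> cball c (1/(32*K)) \<inter> unit_cube. \<bar>h y\<bar> \<le> t}
    \<le> (6 * 4 ^ CARD('k) * (1/(32*K)) ^ (CARD('k) - 1) * (16 * K)
        + (48 * real CARD('k) * 3 ^ CARD('k) + 40) * (2 * K) * (2 * (1/(8*K))) ^ (CARD('k) - 2)) * (t / L)"
    (is "measure lebesgue ?W \<le> (?CA + ?CB) * (t / L)")
proof -
  have CA0: "?CA \<ge> 0" and CB0: "?CB \<ge> 0" using K by simp_all
  have tL: "t / L \<ge> 0" using t L by simp
  show ?thesis
  proof (cases "?W = {}")
    case True
    have "measure lebesgue ?W = 0" unfolding True by simp
    moreover have "0 \<le> (?CA + ?CB) * (t / L)"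
      by (rule mult_nonneg_nonneg[OF add_nonneg_nonneg[OF CA0 CB0] tL])
    ultimately show ?thesis by linarith
  next
    case False
    then obtain z where z: "z \<in> cball c (1/(32*K))" "z \<in> unit_cube" "\<bar>h z\<bar> \<le> t" by blast
    show ?thesis
    proof (cases "norm (Dh z) \<ge> L / (8*K)")
      case True
      then have "measure lebesgue ?W \<le> ?CA * (t / L)"
        by (rule abs_sublevel_measure_large_gradient[OF reg K L t(1,2) z(1,2)])
      also have "\<dots> \<le> (?CA + ?CB) * (t / L)" using CB0 tL by (intro mult_right_mono) auto
      finally show ?thesis .
    next
      case False
      then have Dz: "norm (Dh z) < L / (8*K)" by linarith
      define G where "G = cball z (1/(8*K)) \<inter> unit_cube"
      have sub: "?W \<subseteq> {y \<in> G. \<bar>h y\<bar> \<le> t}"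
      proof
        fix y assume y: "y \<in> ?W"
        have "dist z y \<le> dist c z + dist c y" by (rule dist_triangle3)
        also have "\<dots> \<le> 1/(8*K)" using y z(1) K by (simp add: field_simps)
        finally show "y \<in> {y \<in> G. \<bar>h y\<bar> \<le> t}" using y unfolding G_def by auto
      qed
      have meas: "{y \<in> S \<inter> unit_cube. \<bar>h y\<bar> \<le> t} \<in> lmeasurable" if "closed S" for S
      proof (rule lmeasurable_abs_sublevel)
        show "compact (S \<inter> unit_cube)" using that by (simp add: closed_Int_compact unit_cube_def)
        show "continuous_on (S \<inter> unit_cube) h" by (rule C2_bounded_subset(3)[OF reg]) blast
      qed
      have "measure lebesgue ?W \<le> measure lebesgue {y \<in> G. \<bar>h y\<bar> \<le> t}"
        using sub unfolding G_def
        by (rule measure_mono_fmeasurable[OF _ fmeasurableD[OF meas[OF closed_cball]] meas[OF closed_cball]])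
      also have "\<dots> \<le> ?CB * (t / L)"
        unfolding G_def
        by (rule abs_sublevel_measure_small_gradient[OF m2 reg K L nd t(1,3) z(2,3) Dz])
      also have "\<dots> \<le> (?CA + ?CB) * (t / L)" using CA0 tL by (intro mult_right_mono) auto
      finally show ?thesis .
    qed
  qed
qed

lemma abs_sublevel_measure_le:
  fixes K :: real
  assumes m2: "CARD('k) \<ge> 2" and K: "K > 0"
  obtains C0 where "C0 > 0"
    and "\<And>(h :: real^'k \<Rightarrow> real) Dh Hh L t. L > 0 \<Longrightarrow> C2_bounded unit_cube h Dh Hh L \<Longrightarrow>
      (\<And>x \<xi>. x \<in> unit_cube \<Longrightarrow> norm \<xi> = 1 \<Longrightarrow> L / K \<le> \<bar>h x\<bar> + norm (Dh x) + \<bar>(Hh x *v \<xi>) \<bullet> \<xi>\<bar>) \<Longrightarrow>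
      t > 0 \<Longrightarrow> t \<le> L / (1536 * K\<^sup>2) \<Longrightarrow> t \<le> L / (16 * K) \<Longrightarrow>
      measure lebesgue {x \<in> unit_cube. \<bar>h x\<bar> \<le> t} \<le> C0 * (t / L)"
proof -
  define \<rho> where "\<rho> = 1/(32*K)"
  define CP where "CP = 6 * 4 ^ CARD('k) * (1/(32*K)) ^ (CARD('k) - 1) * (16 * K)
        + (48 * real CARD('k) * 3 ^ CARD('k) + 40) * (2 * K) * (2 * (1/(8*K))) ^ (CARD('k) - 2)"
  have CP0: "CP \<ge> 0" unfolding CP_def using K by simp
  have "\<rho> > 0" unfolding \<rho>_def using K by simp
  moreover have "\<forall>\<epsilon>>0. \<exists>k. finite k \<and> k \<subseteq> (unit_cube :: (real^'k) set) \<and> unit_cube \<subseteq> (\<Union>x\<in>k. ball x \<epsilon>)"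
    by (rule seq_compact_imp_totally_bounded[OF compact_imp_seq_compact[OF convex_compact_unit_cube(2)]])
  ultimately obtain Ctr :: "(real^'k) set" where Ctr: "finite Ctr" "unit_cube \<subseteq> (\<Union>c\<in>Ctr. ball c \<rho>)"
    by meson
  define C0 where "C0 = (real (card Ctr) + 1) * (CP + 1)"
  show ?thesis
  proof
    show "C0 > 0" unfolding C0_def using CP0 by (simp add: add_pos_nonneg)
    fix h :: "real^'k \<Rightarrow> real" and Dh Hh L t
    assume L: "L > 0" and reg: "C2_bounded unit_cube h Dh Hh L" and t: "t > 0" "t \<le> L / (1536 * K\<^sup>2)" "t \<le> L / (16 * K)"
      and nd: "\<And>x \<xi>. x \<in> unit_cube \<Longrightarrow> norm \<xi> = 1 \<Longrightarrow> L / K \<le> \<bar>h x\<bar> + norm (Dh x) + \<bar>(Hh x *v \<xi>) \<bullet> \<xi>\<bar>"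
    define P where "P c = {y \<in> cball c \<rho> \<inter> unit_cube. \<bar>h y\<bar> \<le> t}" for c
    have hc: "continuous_on unit_cube h" using C2_bounded_subset(3)[OF reg] by blast
    have Pc: "compact (P c)" for c unfolding P_def
    proof (rule compact_abs_sublevel)
      show "compact (cball c \<rho> \<inter> unit_cube)" by (rule compact_Int_closed) (auto simp: unit_cube_def)
      show "continuous_on (cball c \<rho> \<inter> unit_cube) h" by (rule continuous_on_subset[OF hc]) simp
    qed
    have Pm: "measure lebesgue (P c) \<le> CP * (t / L)" for c
      unfolding P_def CP_def \<rho>_def by (rule abs_sublevel_measure_local[OF m2 reg K L nd t])
    have sub: "{x \<in> unit_cube. \<bar>h x\<bar> \<le> t} \<subseteq> (\<Union>c\<in>Ctr. P c)"
    proof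
      fix x assume x: "x \<in> {x \<in> unit_cube. \<bar>h x\<bar> \<le> t}"
      then obtain c where "c \<in> Ctr" "x \<in> ball c \<rho>" using Ctr(2) by blast
      then show "x \<in> (\<Union>c\<in>Ctr. P c)" using x unfolding P_def by (auto intro!: bexI[of _ c])
    qed
    have "measure lebesgue {x \<in> unit_cube. \<bar>h x\<bar> \<le> t} \<le> measure lebesgue (\<Union>c\<in>Ctr. P c)"
    proof (rule measure_mono_fmeasurable[OF sub])
      show "{x \<in> unit_cube. \<bar>h x\<bar> \<le> t} \<in> sets lebesgue"
        using lmeasurable_abs_sublevel[OF convex_compact_unit_cube(2) hc] by (rule fmeasurableD)
      show "(\<Union>c\<in>Ctr. P c) \<in> fmeasurable lebesgue"
        using Ctr(1) Pc by (intro lmeasurable_compact compact_UN) auto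
    qed
    also have "\<dots> \<le> (\<Sum>c\<in>Ctr. measure lebesgue (P c))"
      using Ctr(1) Pc by (intro measure_UNION_le) (auto intro: fmeasurableD lmeasurable_compact)
    also have "\<dots> \<le> (\<Sum>c\<in>Ctr. CP * (t / L))" by (intro sum_mono Pm)
    also have "\<dots> = real (card Ctr) * CP * (t / L)" by simp
    also have "\<dots> \<le> C0 * (t / L)" unfolding C0_def using CP0 t L
      by (intro mult_right_mono) (auto simp: algebra_simps)
    finally show "measure lebesgue {x \<in> unit_cube. \<bar>h x\<bar> \<le> t} \<le> C0 * (t / L)" .
  qed
qed

section \<open>Covering numbers and packing\<close>

lemma cov_num_cover:
  fixes A :: "'a::metric_space set"
  assumes "finite A" "\<delta> \<ge> 0"
  obtains G where "finite G" "card G = cov_num \<delta> A" "A \<subseteq> (\<Union>c\<in>G. cball c \<delta>)"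
proof -
  have "\<exists>N G. finite G \<and> card G = N \<and> A \<subseteq> (\<Union>c\<in>G. cball c \<delta>)"
    using assms by (intro exI[of _ "card A"] exI[of _ A]) auto
  then have "\<exists>G. finite G \<and> card G = cov_num \<delta> A \<and> A \<subseteq> (\<Union>c\<in>G. cball c \<delta>)"
    unfolding cov_num_def by (rule LeastI_ex)
  then show ?thesis using that by blast
qed

lemma cov_num_le:
  fixes A :: "'a::metric_space set"
  assumes "finite G" "A \<subseteq> (\<Union>c\<in>G. cball c \<delta>)"
  shows "cov_num \<delta> A \<le> card G"
  unfolding cov_num_def using assms by (intro Least_le) blast

lemma cov_num_le_card:
  fixes A :: "'a::metric_space set"
  assumes "finite A" "\<delta> \<ge> 0"
  shows "cov_num \<delta> A \<le> card A"
  by (rule cov_num_le[OF assms(1)]) (use assms(2) in auto)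

lemma cov_num_UN_le:
  fixes B :: "'a::metric_space set"
  assumes I: "finite I" and fin: "\<And>i. i \<in> I \<Longrightarrow> finite (A i)" and d: "\<delta> \<ge> 0"
    and sub: "B \<subseteq> (\<Union>i\<in>I. A i)"
  shows "cov_num \<delta> B \<le> (\<Sum>i\<in>I. cov_num \<delta> (A i))"
proof -
  have "\<forall>i\<in>I. \<exists>G. finite G \<and> card G = cov_num \<delta> (A i) \<and> A i \<subseteq> (\<Union>c\<in>G. cball c \<delta>)"
  proof
    fix i assume "i \<in> I"
    show "\<exists>G. finite G \<and> card G = cov_num \<delta> (A i) \<and> A i \<subseteq> (\<Union>c\<in>G. cball c \<delta>)"
      by (rule cov_num_cover[OF fin[OF \<open>i \<in> I\<close>] d]) blast
  qed
  then obtain G where G: "\<And>i. i \<in> I \<Longrightarrow> finite (G i) \<and> card (G i) = cov_num \<delta> (A i)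
                                   \<and> A i \<subseteq> (\<Union>c\<in>G i. cball c \<delta>)"
    by metis
  have fG: "finite (\<Union>i\<in>I. G i)" using I G by blast
  have "B \<subseteq> (\<Union>c\<in>(\<Union>i\<in>I. G i). cball c \<delta>)"
  proof
    fix x assume "x \<in> B"
    then obtain i where i: "i \<in> I" "x \<in> A i" using sub by blast
    then obtain c where "c \<in> G i" "x \<in> cball c \<delta>" using G[OF i(1)] by blast
    then show "x \<in> (\<Union>c\<in>(\<Union>i\<in>I. G i). cball c \<delta>)" using i(1) by blast
  qed
  then have "cov_num \<delta> B \<le> card (\<Union>i\<in>I. G i)" by (rule cov_num_le[OF fG])
  also have "\<dots> \<le> (\<Sum>i\<in>I. card (G i))" by (rule card_UN_le[OF I])
  also have "\<dots> = (\<Sum>i\<in>I. cov_num \<delta> (A i))" using G by (intro sum.cong) auto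
  finally show ?thesis .
qed

lemma finite_maximal_separated_subset:
  fixes A :: "'a::metric_space set"
  assumes "finite A" "r > 0"
  shows "\<exists>S\<subseteq>A. (\<forall>x\<in>S. \<forall>y\<in>S. x \<noteq> y \<longrightarrow> dist x y \<ge> r) \<and> (\<forall>a\<in>A. \<exists>x\<in>S. dist a x < r)"
  using assms(1)
proof (induction A rule: finite_induct)
  case empty then show ?case by auto
next
  case (insert a A)
  then obtain S where S: "S \<subseteq> A" "\<forall>x\<in>S. \<forall>y\<in>S. x \<noteq> y \<longrightarrow> dist x y \<ge> r" "\<forall>a\<in>A. \<exists>x\<in>S. dist a x < r"
    by blast
  show ?case
  proof (cases "\<exists>x\<in>S. dist a x < r")
    case True
    then show ?thesis using S by (intro exI[of _ S]) auto
  next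
    case False
    have "insert a S \<subseteq> insert a A" using S by auto
    moreover have "\<forall>x\<in>insert a S. \<forall>y\<in>insert a S. x \<noteq> y \<longrightarrow> dist x y \<ge> r"
      using S(2) False by (auto simp: dist_commute not_less)
    moreover have "\<forall>b\<in>insert a A. \<exists>x\<in>insert a S. dist b x < r"
      using S(3) assms(2) by auto
    ultimately show ?thesis by blast
  qed
qed

text \<open>A cube of side \<open>l \<le> 1/2\<close> with a vertex at \<open>x\<close>, opening in each coordinate towards the
  centre, so that it stays inside the unit cube.\<close>
definition inner_cube :: "real \<Rightarrow> real^'k \<Rightarrow> (real^'k) set" where
  "inner_cube l x = cbox (\<chi> j. if x$j \<le> 1/2 then x$j else x$j - l)
                         ((\<chi> j. if x$j \<le> 1/2 then x$j else x$j - l) + l *\<^sub>R 1)"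

lemma inner_cube:
  fixes x :: "real^'k" and l :: real
  assumes x: "x \<in> unit_cube" and l: "0 \<le> l" "l \<le> 1/2"
  shows "inner_cube l x \<subseteq> unit_cube" "inner_cube l x \<subseteq> cball x (CARD('k) * l)"
    "measure lebesgue (inner_cube l x) = l ^ CARD('k)"
proof -
  define lo :: "real^'k" where "lo = (\<chi> j. if x$j \<le> 1/2 then x$j else x$j - l)"
  have x01: "0 \<le> x$j \<and> x$j \<le> 1" for j using x unfolding unit_cube_def by (auto simp: mem_box_cart)
  have comp: "y$j - x$j \<le> l \<and> x$j - y$j \<le> l \<and> 0 \<le> y$j \<and> y$j \<le> 1" if y: "y \<in> inner_cube l x" for y j
  proof -
    have "lo$j \<le> y$j" "y$j \<le> lo$j + l"
      using y unfolding inner_cube_def lo_def[symmetric] by (auto simp: mem_box_cart)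
    moreover have "lo$j = (if x$j \<le> 1/2 then x$j else x$j - l)" unfolding lo_def by simp
    ultimately show ?thesis using x01[of j] l by (cases "x$j \<le> 1/2") auto
  qed
  show "inner_cube l x \<subseteq> unit_cube"
    using comp unfolding unit_cube_def by (auto simp: mem_box_cart)
  show "inner_cube l x \<subseteq> cball x (CARD('k) * l)"
  proof
    fix y assume y: "y \<in> inner_cube l x"
    have "norm (x - y) \<le> (\<Sum>j\<in>UNIV. \<bar>(x - y)$j\<bar>)" by (rule norm_le_l1_cart)
    also have "\<dots> \<le> (\<Sum>j\<in>(UNIV::'k set). l)"
      by (intro sum_mono) (use comp[OF y] in \<open>auto simp: abs_le_iff\<close>)
    finally show "y \<in> cball x (CARD('k) * l)" by (simp add: dist_norm)
  qed
  show "measure lebesgue (inner_cube l x) = l ^ CARD('k)"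
    unfolding inner_cube_def using measure_cube_cart[OF l(1)] by blast
qed

lemma card_separated_le_measure:
  fixes S :: "(real^'k) set" and r :: real
  assumes S: "finite S" "S \<subseteq> unit_cube" and r: "0 < r" "r \<le> 1"
    and sep: "\<And>x y. x \<in> S \<Longrightarrow> y \<in> S \<Longrightarrow> x \<noteq> y \<Longrightarrow> dist x y \<ge> r"
    and V: "V \<in> lmeasurable" "\<And>x. x \<in> S \<Longrightarrow> cball x (r/4) \<inter> unit_cube \<subseteq> V"
  shows "real (card S) * (r / (4 * real CARD('k))) ^ CARD('k) \<le> measure lebesgue V"
proof -
  define l where "l = r / (4 * real CARD('k))"
  have c1: "real CARD('k) \<ge> 1" by (simp add: Suc_le_eq)
  have l: "0 \<le> l" "l \<le> 1/2"
  proof -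
    show "0 \<le> l" unfolding l_def using r by simp
    have "r \<le> 1/2 * (4 * real CARD('k))" using r c1 by linarith
    then show "l \<le> 1/2" unfolding l_def using c1 by (simp add: pos_divide_le_eq)
  qed
  have sub: "inner_cube l x \<subseteq> cball x (r/4) \<inter> unit_cube" if "x \<in> S" for x
    using inner_cube(1,2)[OF _ l, of x] that S(2) unfolding l_def by auto
  have meas: "inner_cube l x \<in> lmeasurable" for x
    unfolding inner_cube_def by (rule lmeasurable_cbox)
  have disj: "disjoint_family_on (inner_cube l) S"
    unfolding disjoint_family_on_def
  proof (intro ballI impI)
    fix x y assume xy: "x \<in> S" "y \<in> S" "x \<noteq> y"
    show "inner_cube l x \<inter> inner_cube l y = {}"
    proof (rule ccontr)
      assume "inner_cube l x \<inter> inner_cube l y \<noteq> {}"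
      then obtain w where "w \<in> cball x (r/4)" "w \<in> cball y (r/4)" using sub xy by blast
      then have "dist x y \<le> r/2" using dist_triangle2[of x y w] by simp
      then show False using sep[OF xy] r by simp
    qed
  qed
  have "(\<Sum>x\<in>S. measure lebesgue (inner_cube l x)) = (\<Sum>x\<in>S. l ^ CARD('k))"
    using inner_cube(3)[OF _ l] S(2) by (intro sum.cong) auto
  then have "real (card S) * l ^ CARD('k) = (\<Sum>x\<in>S. measure lebesgue (inner_cube l x))"
    by simp
  also have "\<dots> = measure lebesgue (\<Union>x\<in>S. inner_cube l x)"
  proof (rule measure_finite_Union[symmetric, OF S(1) _ disj])
    show "inner_cube l ` S \<subseteq> sets lebesgue" using meas fmeasurableD by blast
    show "emeasure lebesgue (inner_cube l x) \<noteq> \<infinity>" for x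
      using meas[of x] unfolding fmeasurable_def by auto
  qed
  also have "\<dots> \<le> measure lebesgue V"
  proof (rule measure_mono_fmeasurable[OF _ _ V(1)])
    show "(\<Union>x\<in>S. inner_cube l x) \<subseteq> V" using sub V(2) by blast
    show "(\<Union>x\<in>S. inner_cube l x) \<in> sets lebesgue"
      using S(1) meas by (intro sets.finite_UN) (auto intro: fmeasurableD)
  qed
  finally show ?thesis unfolding l_def .
qed

section \<open>Differences of members of a cinematic family\<close>

lemma unit_cube_basis_lt: "i \<in> Basis \<Longrightarrow> (0::real^'k) \<bullet> i < (1::real^'k) \<bullet> i"
  by (auto simp: Basis_vec_def inner_axis)

lemma gradient_unique_unit_cube:
  fixes \<phi> :: "real^'k \<Rightarrow> real"
  assumes "x \<in> unit_cube"
    and "(\<phi> has_derivative (\<lambda>v. v1 \<bullet> v)) (at x within unit_cube)"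
    and "(\<phi> has_derivative (\<lambda>v. v2 \<bullet> v)) (at x within unit_cube)"
  shows "v1 = v2"
proof -
  have "(\<lambda>v. v1 \<bullet> v) = (\<lambda>v. v2 \<bullet> v)"
    using frechet_derivative_unique_within_closed_interval[OF unit_cube_basis_lt, of x \<phi>] assms
    unfolding unit_cube_def by blast
  then have "v1 \<bullet> (v1 - v2) = v2 \<bullet> (v1 - v2)" by metis
  then have "(v1 - v2) \<bullet> (v1 - v2) = 0" by (simp add: inner_diff_left)
  then show ?thesis by simp
qed

lemma hessian_unique_unit_cube:
  fixes \<phi> :: "real^'k \<Rightarrow> real^'k"
  assumes "x \<in> unit_cube"
    and "(\<phi> has_derivative (\<lambda>v. M1 *v v)) (at x within unit_cube)"
    and "(\<phi> has_derivative (\<lambda>v. M2 *v v)) (at x within unit_cube)"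
  shows "M1 = M2"
proof -
  have "(\<lambda>v. M1 *v v) = (\<lambda>v. M2 *v v)"
    using frechet_derivative_unique_within_closed_interval[OF unit_cube_basis_lt, of x \<phi>] assms
    unfolding unit_cube_def by blast
  then show ?thesis by (simp add: matrix_eq fun_eq_iff)
qed

lemma has_derivative_grad:
  assumes "(f has_derivative (\<lambda>h. v \<bullet> h)) (at x within U)"
  shows "(f has_derivative (\<lambda>h. grad U f x \<bullet> h)) (at x within U)"
  unfolding grad_def by (rule someI[of _ v]) (rule assms)

lemma has_derivative_hess:
  assumes "(grad U f has_derivative (\<lambda>h. M *v h)) (at x within U)"
  shows "(grad U f has_derivative (\<lambda>h. hess U f x *v h)) (at x within U)"
  unfolding hess_def by (rule someI[of _ M]) (rule assms)

lemma C2_on_diff: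
  fixes f g :: "real^'k \<Rightarrow> real"
  assumes f: "C2_on unit_cube f" and g: "C2_on unit_cube g"
  defines "h \<equiv> \<lambda>x. f x - g x"
  shows "\<And>x. x \<in> unit_cube \<Longrightarrow> grad unit_cube h x = grad unit_cube f x - grad unit_cube g x"
    and "C2_on unit_cube h"
proof -
  define Q where "Q = (unit_cube :: (real^'k) set)"
  have df: "(f has_derivative (\<lambda>v. grad Q f x \<bullet> v)) (at x within Q)"
    and d2f: "(grad Q f has_derivative (\<lambda>v. hess Q f x *v v)) (at x within Q)" if "x \<in> Q" for x
    using f that unfolding C2_on_def Q_def by auto
  have dg: "(g has_derivative (\<lambda>v. grad Q g x \<bullet> v)) (at x within Q)"
    and d2g: "(grad Q g has_derivative (\<lambda>v. hess Q g x *v v)) (at x within Q)" if "x \<in> Q" for x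
    using g that unfolding C2_on_def Q_def by auto
  have hd0: "(h has_derivative (\<lambda>v. (grad Q f x - grad Q g x) \<bullet> v)) (at x within Q)" if "x \<in> Q" for x
    unfolding h_def using has_derivative_diff[OF df[OF that] dg[OF that]] by (simp add: inner_diff_left)
  have hd: "(h has_derivative (\<lambda>v. grad Q h x \<bullet> v)) (at x within Q)" if "x \<in> Q" for x
    by (rule has_derivative_grad[OF hd0[OF that]])
  have gh: "grad Q h x = grad Q f x - grad Q g x" if "x \<in> Q" for x
    using gradient_unique_unit_cube[of x h] hd[OF that] hd0[OF that] that unfolding Q_def by blast
  have gd0: "(grad Q h has_derivative (\<lambda>v. (hess Q f x - hess Q g x) *v v)) (at x within Q)" if "x \<in> Q" for x
  proof -
    have "((\<lambda>y. grad Q f y - grad Q g y) has_derivative (\<lambda>v. (hess Q f x - hess Q g x) *v v)) (at x within Q)"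
      using has_derivative_diff[OF d2f[OF that] d2g[OF that]] by (simp add: matrix_vector_mult_diff_rdistrib)
    then show ?thesis
      by (rule has_derivative_transform_within[where d=1]) (use that gh in auto)
  qed
  have gd: "(grad Q h has_derivative (\<lambda>v. hess Q h x *v v)) (at x within Q)" if "x \<in> Q" for x
    by (rule has_derivative_hess[OF gd0[OF that]])
  have hh: "hess Q h x = hess Q f x - hess Q g x" if "x \<in> Q" for x
    using hessian_unique_unit_cube[of x "grad Q h"] gd[OF that] gd0[OF that] that unfolding Q_def by blast
  show "grad unit_cube h x = grad unit_cube f x - grad unit_cube g x" if "x \<in> unit_cube" for x
    using gh that unfolding Q_def by blast
  have "continuous_on Q (\<lambda>x. hess Q f x - hess Q g x)"
    using f g unfolding C2_on_def Q_def by (intro continuous_on_diff) auto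
  then have "continuous_on Q (hess Q h)" using hh by (metis (no_types, lifting) continuous_on_cong)
  then show "C2_on unit_cube h" using hd gd unfolding C2_on_def Q_def by blast
qed

lemma C2_bounded_C2_norm:
  fixes h :: "real^'k \<Rightarrow> real"
  assumes "C2_on unit_cube h"
  shows "C2_bounded unit_cube h (grad unit_cube h) (hess unit_cube h) (C2_norm unit_cube h)"
proof -
  define Q where "Q = (unit_cube :: (real^'k) set)"
  have hd: "(h has_derivative (\<lambda>v. grad Q h x \<bullet> v)) (at x within Q)"
    and gd: "(grad Q h has_derivative (\<lambda>v. hess Q h x *v v)) (at x within Q)" if "x \<in> Q" for x
    using assms that unfolding C2_on_def Q_def by auto
  have Hc: "continuous_on Q (hess Q h)" using assms unfolding C2_on_def Q_def by blast
  have Qc: "compact Q" unfolding Q_def unit_cube_def by simp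
  have bdd: "bdd_above ((\<lambda>x. \<bar>h x\<bar>) ` Q)" "bdd_above ((\<lambda>x. norm (grad Q h x)) ` Q)"
    "bdd_above ((\<lambda>x. norm (hess Q h x)) ` Q)"
    using has_derivative_continuous_on[OF hd] has_derivative_continuous_on[OF gd] Hc Qc
    by (auto intro!: bounded_imp_bdd_above compact_imp_bounded compact_continuous_image continuous_intros)
  then obtain B where B: "\<And>x. x \<in> Q \<Longrightarrow> norm (hess Q h x) \<le> B"
    by (auto simp: bdd_above_def)
  have "onorm (\<lambda>v. hess Q h x *v v) \<le> real CARD('k) * real CARD('k) * B" if "x \<in> Q" for x
  proof -
    have "\<bar>hess Q h x $ i $ j\<bar> \<le> B" for i j
      using component_le_norm_cart[of "hess Q h x $ i" j] Finite_Cartesian_Product.norm_nth_le[of "hess Q h x" i] B[OF that]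
      by linarith
    then show ?thesis using onorm_le_matrix_component[of "hess Q h x" B] by simp
  qed
  then have b3: "bdd_above ((\<lambda>x. onorm (\<lambda>v. hess Q h x *v v)) ` Q)"
    by (intro bdd_aboveI2) auto
  define S1 where "S1 = (SUP x\<in>Q. \<bar>h x\<bar>)"
  define S2 where "S2 = (SUP x\<in>Q. norm (grad Q h x))"
  define S3 where "S3 = (SUP x\<in>Q. onorm (\<lambda>v. hess Q h x *v v))"
  have u1: "\<bar>h x\<bar> \<le> S1" and u2: "norm (grad Q h x) \<le> S2" and u3: "onorm (\<lambda>v. hess Q h x *v v) \<le> S3"
    if "x \<in> Q" for x
    unfolding S1_def S2_def S3_def using bdd(1,2) b3 that by (auto intro: cSUP_upper2)
  have x0: "(0::real^'k) \<in> Q" unfolding Q_def unit_cube_def by (simp add: mem_box_cart)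
  have "S1 \<ge> 0" "S2 \<ge> 0"
    using u1[OF x0] u2[OF x0] norm_ge_zero[of "grad Q h 0"] by linarith+
  moreover have "S3 \<ge> 0" using u3[OF x0] onorm_pos_le[of "\<lambda>v. hess Q h 0 *v v"] by simp
  ultimately have "\<bar>h x\<bar> \<le> S1 + S2 + S3 \<and> norm (grad Q h x) \<le> S1 + S2 + S3
      \<and> onorm (\<lambda>v. hess Q h x *v v) \<le> S1 + S2 + S3" if "x \<in> Q" for x
    using u1[OF that] u2[OF that] u3[OF that] by linarith
  moreover have "C2_norm Q h = S1 + S2 + S3" unfolding C2_norm_def S1_def S2_def S3_def by simp
  ultimately show ?thesis
    using hd gd Hc unfolding C2_bounded_def Q_def[symmetric] by auto
qed

lemma cinematic_nondegenerate:
  fixes F :: "(real^'k \<Rightarrow> real) set"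
  assumes cin: "cinematic unit_cube F K D \<alpha> \<eta>0" and f: "f \<in> F" and g: "g \<in> F"
    and x: "x \<in> unit_cube" and \<xi>: "norm \<xi> = 1"
  defines "h \<equiv> \<lambda>x. f x - g x"
  shows "C2_norm unit_cube h / K
           \<le> \<bar>h x\<bar> + norm (grad unit_cube h x) + \<bar>(hess unit_cube h x *v \<xi>) \<bullet> \<xi>\<bar>"
proof -
  have C2: "C2_on unit_cube f" "C2_on unit_cube g"
    using cin f g unfolding cinematic_def by auto
  have bb: "bdd_below ((\<lambda>x. \<bar>f x - g x\<bar> + norm (grad unit_cube f x - grad unit_cube g x)
              + \<bar>dd2 unit_cube h \<xi> x\<bar>) ` unit_cube)"
    by (rule bdd_belowI2[of _ 0]) auto
  have "C2_norm unit_cube h / K \<le> (INF x\<in>unit_cube. \<bar>f x - g x\<bar>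
      + norm (grad unit_cube f x - grad unit_cube g x) + \<bar>dd2 unit_cube h \<xi> x\<bar>)"
    using cin f g \<xi> unfolding cinematic_def h_def by blast
  also have "\<dots> \<le> \<bar>f x - g x\<bar> + norm (grad unit_cube f x - grad unit_cube g x) + \<bar>dd2 unit_cube h \<xi> x\<bar>"
    by (rule cINF_lower[OF bb x])
  finally show ?thesis
    unfolding dd2_def h_def using C2_on_diff(1)[OF C2 x] by simp
qed

section \<open>Counting the near-intersection\<close>

lemma powr_net_scaling:
  fixes \<delta> L s :: real
  assumes "\<delta> > 0" "L > 0"
  shows "(\<delta> / L) powr (real k + s) * \<delta> powr (- (real k + s)) = (\<delta> / L) ^ k * \<delta> powr (- real k) / L powr s"
proof -
  have a: "(\<delta> / L) powr (real k + s) = (\<delta> / L) ^ k * (\<delta> / L) powr s"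
    using assms by (simp add: powr_add powr_realpow)
  have b: "\<delta> powr (- (real k + s)) = \<delta> powr (- real k) * \<delta> powr (- s)"
    by (simp add: powr_add[symmetric])
  have c: "(\<delta> / L) powr s * \<delta> powr (- s) = 1 / L powr s"
    using assms by (simp add: powr_divide powr_minus_divide)
  have "(\<delta> / L) powr (real k + s) * \<delta> powr (- (real k + s))
      = (\<delta> / L) ^ k * \<delta> powr (- real k) * ((\<delta> / L) powr s * \<delta> powr (- s))"
    unfolding a b by (simp add: mult_ac)
  also have "\<dots> = (\<delta> / L) ^ k * \<delta> powr (- real k) / L powr s" unfolding c by simp
  finally show ?thesis .
qed

lemma card_separated_near_zero_le:
  fixes h :: "real^'k \<Rightarrow> real"
  assumes lip: "\<And>x y. x \<in> unit_cube \<Longrightarrow> y \<in> unit_cube \<Longrightarrow> \<bar>h x - h y\<bar> \<le> L * norm (x - y)"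
    and hc: "continuous_on unit_cube h" and \<delta>: "\<delta> > 0" "\<delta> \<le> L"
    and meas: "measure lebesgue {x \<in> unit_cube. \<bar>h x\<bar> \<le> 3 * \<delta>} \<le> C0 * (3 * \<delta> / L)"
    and S: "finite S" "S \<subseteq> unit_cube" "\<And>x. x \<in> S \<Longrightarrow> \<bar>h x\<bar> \<le> 2 * \<delta>"
    and sep: "\<And>x y. x \<in> S \<Longrightarrow> y \<in> S \<Longrightarrow> x \<noteq> y \<Longrightarrow> dist x y \<ge> \<delta> / L"
  shows "real (card S) * (\<delta> / L) ^ (CARD('k) - 1) \<le> 3 * C0 * (4 * real CARD('k)) ^ CARD('k)"
proof -
  define r where "r = \<delta> / L"
  define m where "m = CARD('k)"
  have L: "L > 0" using \<delta> by linarith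
  have r: "0 < r" "r \<le> 1" unfolding r_def using \<delta> L by auto
  have "real (card S) * (r / (4 * real m)) ^ m \<le> measure lebesgue {x \<in> unit_cube. \<bar>h x\<bar> \<le> 3 * \<delta>}"
    unfolding m_def
  proof (rule card_separated_le_measure[OF S(1,2) r])
    show "dist x y \<ge> r" if "x \<in> S" "y \<in> S" "x \<noteq> y" for x y using sep that unfolding r_def by blast
    show "{x \<in> unit_cube. \<bar>h x\<bar> \<le> 3 * \<delta>} \<in> lmeasurable"
      by (rule lmeasurable_abs_sublevel[OF convex_compact_unit_cube(2) hc])
    show "cball x (r/4) \<inter> unit_cube \<subseteq> {x \<in> unit_cube. \<bar>h x\<bar> \<le> 3 * \<delta>}" if x: "x \<in> S" for x
    proof
      fix y assume y: "y \<in> cball x (r/4) \<inter> unit_cube"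
      have "\<bar>h y - h x\<bar> \<le> L * norm (y - x)" using lip y S(2) x by blast
      also have "\<dots> \<le> L * (r / 4)" using y L by (intro mult_left_mono) (auto simp: dist_norm norm_minus_commute)
      also have "\<dots> = \<delta> / 4" unfolding r_def using L by simp
      finally have "\<bar>h y - h x\<bar> \<le> \<delta> / 4" .
      then have "\<bar>h y\<bar> \<le> 3 * \<delta>" using S(3)[OF x] \<delta> by linarith
      then show "y \<in> {x \<in> unit_cube. \<bar>h x\<bar> \<le> 3 * \<delta>}" using y by simp
    qed
  qed
  also have "\<dots> \<le> r * (3 * C0)" using meas unfolding r_def by (simp add: mult_ac)
  finally have packed: "real (card S) * (r / (4 * real m)) ^ m \<le> r * (3 * C0)" .
  have "m = Suc (m - 1)" unfolding m_def by simp
  then have "(r / (4 * real m)) ^ m = r * r ^ (m - 1) / (4 * real m) ^ m"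
    by (metis power_Suc power_divide)
  then have "r * (real (card S) * r ^ (m - 1)) \<le> r * (3 * C0 * (4 * real m) ^ m)"
    using packed by (simp add: field_simps m_def)
  then have "real (card S) * r ^ (m - 1) \<le> 3 * C0 * (4 * real m) ^ m"
    using r(1) by (rule mult_left_le_imp_le)
  then show ?thesis unfolding r_def m_def .
qed

lemma cov_num_le_net:
  fixes E A S :: "'a::metric_space set"
  assumes E: "finite E" "delta_sigma_set \<delta> \<sigma> C E" and AE: "A \<subseteq> E"
    and S: "finite S" "\<And>a. a \<in> A \<Longrightarrow> \<exists>x\<in>S. dist a x < r" and \<delta>: "\<delta> > 0" "\<delta> \<le> r"
  shows "real (cov_num \<delta> A) \<le> real (card S) * (C * r powr \<sigma> * real (cov_num \<delta> E))"
proof -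
  have "cov_num \<delta> A \<le> (\<Sum>x\<in>S. cov_num \<delta> (E \<inter> ball x r))"
  proof (rule cov_num_UN_le[OF S(1)])
    show "A \<subseteq> (\<Union>x\<in>S. E \<inter> ball x r)" using S(2) AE by (fastforce simp: dist_commute)
  qed (use E(1) \<delta> in auto)
  then have "real (cov_num \<delta> A) \<le> (\<Sum>x\<in>S. real (cov_num \<delta> (E \<inter> ball x r)))"
    by (metis of_nat_le_iff of_nat_sum)
  also have "\<dots> \<le> (\<Sum>x\<in>S. C * r powr \<sigma> * real (cov_num \<delta> E))"
    using E(2) \<delta>(2) unfolding delta_sigma_set_def by (intro sum_mono) blast
  finally show ?thesis by simp
qed

lemma cov_num_near_zero_le:
  fixes h :: "real^'k \<Rightarrow> real" and E A :: "(real^'k) set"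
  assumes reg: "C2_bounded unit_cube h Dh Hh L"
    and sublevel: "\<And>t. 0 < t \<Longrightarrow> t \<le> c * L \<Longrightarrow> measure lebesgue {x \<in> unit_cube. \<bar>h x\<bar> \<le> t} \<le> C0 * (t / L)"
    and c: "c > 0" and C0: "C0 \<ge> 0" and \<delta>: "\<delta> > 0" "\<delta> \<le> L" "L \<le> 1" and \<epsilon>: "\<epsilon> > 0" and s: "0 < s" "s \<le> 1"
    and E: "finite E" "delta_sigma_set \<delta> (real CARD('k) - 1 + s) (\<delta> powr (-\<epsilon>)) E"
      "real (card E) \<le> \<delta> powr (-(real CARD('k) - 1 + s))"
    and AE: "A \<subseteq> E" and A: "\<And>x. x \<in> A \<Longrightarrow> x \<in> unit_cube \<and> \<bar>h x\<bar> \<le> 2 * \<delta>"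
  shows "real (cov_num \<delta> A) \<le> (max 1 (3 / c) + 3 * C0 * (4 * real CARD('k)) ^ CARD('k))
           * \<delta> powr (-\<epsilon>) * \<delta> powr (-(real CARD('k) - 1)) / L powr s"
proof -
  define k where "k = CARD('k) - 1"
  define M1 where "M1 = max 1 (3 / c)"
  define M2 where "M2 = 3 * C0 * (4 * real CARD('k)) ^ CARD('k)"
  define U where "U = \<delta> powr (-\<epsilon>) * \<delta> powr (- real k) / L powr s"
  have k: "real CARD('k) - 1 = real k" unfolding k_def by (simp add: of_nat_diff)
  have L: "L > 0" using \<delta> by linarith
  have U: "U \<ge> 0" and M1: "M1 \<ge> 1" and M2: "M2 \<ge> 0"
    unfolding U_def M1_def M2_def using C0 by auto
  have finA: "finite A" using finite_subset[OF AE E(1)] .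
  have "real (cov_num \<delta> A) \<le> M1 * U \<or> real (cov_num \<delta> A) \<le> M2 * U"
  proof (cases "3 * \<delta> \<le> c * L")
    case False
    have "real (cov_num \<delta> A) \<le> real (card E)"
      using cov_num_le_card[OF finA] card_mono[OF E(1) AE] \<delta> by (meson less_imp_le of_nat_mono order_trans)
    also have "\<dots> \<le> \<delta> powr (- real k) * \<delta> powr (- s)"
      using E(3) unfolding k by (simp add: powr_add[symmetric])
    also have "\<delta> powr (- s) = (L / \<delta>) powr s / L powr s"
      using \<delta> L by (simp add: powr_divide powr_minus_divide)
    finally have X: "real (cov_num \<delta> A) \<le> \<delta> powr (- real k) * ((L / \<delta>) powr s / L powr s)" .
    have "(L / \<delta>) powr s \<le> (L / \<delta>) powr 1" using \<delta> s by (intro powr_mono) auto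
    also have "\<dots> \<le> 3 / c" using False c \<delta> by (simp add: field_simps)
    also have "\<dots> \<le> M1" unfolding M1_def by simp
    also have "\<dots> \<le> M1 * \<delta> powr (-\<epsilon>)"
      using M1 \<delta> \<epsilon> by (simp add: powr_minus_divide le_divide_eq powr_le1)
    finally have "\<delta> powr (- real k) * ((L / \<delta>) powr s / L powr s)
        \<le> \<delta> powr (- real k) * (M1 * \<delta> powr (-\<epsilon>) / L powr s)"
      by (intro mult_left_mono divide_right_mono) auto
    then have "real (cov_num \<delta> A) \<le> \<delta> powr (- real k) * (M1 * \<delta> powr (-\<epsilon>) / L powr s)"
      using X by linarith
    then show ?thesis unfolding U_def by (simp add: mult_ac)
  next
    case True
    define r where "r = \<delta> / L"
    have r: "r > 0" "\<delta> \<le> r" unfolding r_def using \<delta> L by (auto simp: field_simps intro: mult_left_le)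
    obtain S where S: "S \<subseteq> A" "\<forall>x\<in>S. \<forall>y\<in>S. x \<noteq> y \<longrightarrow> dist x y \<ge> r" "\<forall>a\<in>A. \<exists>x\<in>S. dist a x < r"
      using finite_maximal_separated_subset[OF finA r(1)] by blast
    have finS: "finite S" using S(1) finA finite_subset by blast
    have NS: "real (card S) * r ^ k \<le> M2"
      unfolding r_def k_def M2_def
    proof (rule card_separated_near_zero_le[OF _ _ \<delta>(1,2) _ finS])
      show "\<bar>h x - h y\<bar> \<le> L * norm (x - y)" if "x \<in> unit_cube" "y \<in> unit_cube" for x y
        by (rule C2_bounded_lipschitz[OF reg convex_compact_unit_cube(1) that])
      show "continuous_on unit_cube h" using C2_bounded_subset(3)[OF reg] by blast
      show "measure lebesgue {x \<in> unit_cube. \<bar>h x\<bar> \<le> 3 * \<delta>} \<le> C0 * (3 * \<delta> / L)"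
        using sublevel[of "3 * \<delta>"] \<delta> True by simp
    qed (use S A r_def in auto)
    have "real (cov_num \<delta> E) \<le> \<delta> powr (- (real k + s))"
      using cov_num_le_card[OF E(1)] \<delta> E(3) unfolding k by (meson less_imp_le of_nat_mono order_trans)
    then have "real (cov_num \<delta> A) \<le> real (card S) * (\<delta> powr (-\<epsilon>) * r powr (real k + s) * \<delta> powr (- (real k + s)))"
      using cov_num_le_net[OF E(1) _ AE finS _ \<delta>(1) r(2)] E(2) S(3) unfolding k
      by (smt (verit) mult_left_mono of_nat_0_le_iff powr_ge_zero zero_le_mult_iff)
    also have "\<dots> = (real (card S) * r ^ k) * U"
      unfolding U_def r_def using powr_net_scaling[OF \<delta>(1) L, of k s] by (simp add: mult_ac)
    also have "\<dots> \<le> M2 * U" using NS U by (rule mult_right_mono)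
    finally show ?thesis by blast
  qed
  then have "real (cov_num \<delta> A) \<le> (M1 + M2) * U"
    using U M1 M2 by (smt (verit) mult_right_mono)
  then show ?thesis unfolding M1_def M2_def U_def k by (simp add: mult.assoc)
qed

lemma cov_num_fnbhd_Int_le:
  fixes F :: "(real^'k \<Rightarrow> real) set" and E :: "(real^'k) set"
  assumes sublevel: "\<And>(h :: real^'k \<Rightarrow> real) Dh Hh L t. L > 0 \<Longrightarrow> C2_bounded unit_cube h Dh Hh L \<Longrightarrow>
      (\<And>x \<xi>. x \<in> unit_cube \<Longrightarrow> norm \<xi> = 1 \<Longrightarrow> L / K \<le> \<bar>h x\<bar> + norm (Dh x) + \<bar>(Hh x *v \<xi>) \<bullet> \<xi>\<bar>) \<Longrightarrow>
      t > 0 \<Longrightarrow> t \<le> L / (1536 * K\<^sup>2) \<Longrightarrow> t \<le> L / (16 * K) \<Longrightarrow>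
      measure lebesgue {x \<in> unit_cube. \<bar>h x\<bar> \<le> t} \<le> C0 * (t / L)"
    and C0: "C0 \<ge> 0" and c: "c > 0" "c \<le> 1 / (1536 * K\<^sup>2)" "c \<le> 1 / (16 * K)"
    and cin: "cinematic unit_cube F K D \<alpha> \<eta>0" and \<delta>: "\<delta> > 0" and fg: "f \<in> F" "g \<in> F"
    and norm_fg: "\<delta> \<le> C2_norm unit_cube (\<lambda>x. f x - g x)" "C2_norm unit_cube (\<lambda>x. f x - g x) \<le> 1"
    and \<epsilon>: "\<epsilon> > 0" and s: "0 < s" "s \<le> 1" and E: "finite E" "E \<subseteq> unit_cube"
      "delta_sigma_set \<delta> (real CARD('k) - 1 + s) (\<delta> powr (-\<epsilon>)) E"
      "real (card E) \<le> \<delta> powr (-(real CARD('k) - 1 + s))"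
  shows "real (cov_num \<delta> (E \<inter> fst ` (fnbhd \<delta> f \<inter> fnbhd \<delta> g)))
         \<le> (max 1 (3 / c) + 3 * C0 * (4 * real CARD('k)) ^ CARD('k)) * \<delta> powr (-\<epsilon>)
             * \<delta> powr (-(real CARD('k) - 1)) / C2_norm unit_cube (\<lambda>x. f x - g x) powr s"
proof (rule cov_num_near_zero_le[OF _ _ c(1) C0 \<delta> norm_fg \<epsilon> s E(1,3,4)])
  define h where "h = (\<lambda>x. f x - g x)"
  define L where "L = C2_norm unit_cube h"
  have "C2_on unit_cube f" "C2_on unit_cube g" using cin fg unfolding cinematic_def by auto
  then show reg: "C2_bounded unit_cube (\<lambda>x. f x - g x) (grad unit_cube h) (hess unit_cube h) L"
    unfolding L_def h_def by (intro C2_bounded_C2_norm C2_on_diff(2))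
  have "K > 0" using cin unfolding cinematic_def by blast
  have L: "L > 0" using \<delta> norm_fg unfolding L_def h_def by linarith
  show "measure lebesgue {x \<in> unit_cube. \<bar>f x - g x\<bar> \<le> t} \<le> C0 * (t / L)"
    if "0 < t" "t \<le> c * L" for t
  proof (rule sublevel[OF L reg])
    show "L / K \<le> \<bar>f x - g x\<bar> + norm (grad unit_cube h x) + \<bar>(hess unit_cube h x *v \<xi>) \<bullet> \<xi>\<bar>"
      if "x \<in> unit_cube" "norm \<xi> = 1" for x \<xi>
      using cinematic_nondegenerate[OF cin fg that] unfolding L_def h_def .
    have "c * L \<le> L / (1536 * K\<^sup>2)" "c * L \<le> L / (16 * K)"
      using mult_right_mono[OF c(2), of L] mult_right_mono[OF c(3), of L] L by simp_all
    then show "t \<le> L / (1536 * K\<^sup>2)" "t \<le> L / (16 * K)" using that by linarith+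
  qed (use that in simp)
  show "E \<inter> fst ` (fnbhd \<delta> f \<inter> fnbhd \<delta> g) \<subseteq> E" by blast
  show "x \<in> unit_cube \<and> \<bar>f x - g x\<bar> \<le> 2 * \<delta>" if "x \<in> E \<inter> fst ` (fnbhd \<delta> f \<inter> fnbhd \<delta> g)" for x
    using that unfolding fnbhd_def by auto
qed

theorem lemma3p1:
  fixes K D \<eta>0 :: real and \<alpha> :: "real \<Rightarrow> real"
  assumes "CARD('k::finite) \<ge> 2"
  shows "\<exists>C>0. \<forall>(F :: (real^'k \<Rightarrow> real) set) \<delta> f g \<epsilon> s (E :: (real^'k) set).
     cinematic unit_cube F K D \<alpha> \<eta>0 \<and> \<delta> > 0 \<and> f \<in> F \<and> g \<in> F \<and>
     \<delta> \<le> C2_norm unit_cube (\<lambda>x. f x - g x) \<and> C2_norm unit_cube (\<lambda>x. f x - g x) \<le> 1 \<and>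
     \<epsilon> > 0 \<and> 0 < s \<and> s \<le> 1 \<and>
     finite E \<and> E \<subseteq> unit_cube \<and>
     delta_sigma_set \<delta> (real CARD('k) - 1 + s) (\<delta> powr (-\<epsilon>)) E \<and>
     real (card E) \<le> \<delta> powr (-(real CARD('k) - 1 + s))
     \<longrightarrow> real (cov_num \<delta> (E \<inter> fst ` (fnbhd \<delta> f \<inter> fnbhd \<delta> g)))
         \<le> C * \<delta> powr (-\<epsilon>) * \<delta> powr (-(real CARD('k) - 1))
             / C2_norm unit_cube (\<lambda>x. f x - g x) powr s"
proof (cases "K > 0")
  case False
  then show ?thesis by (intro exI[of _ 1]) (simp add: cinematic_def)
next
  case K: True
  obtain C0 where C0: "C0 > 0" and sublevel: "\<And>(h :: real^'k \<Rightarrow> real) Dh Hh L t. L > 0 \<Longrightarrow>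
      C2_bounded unit_cube h Dh Hh L \<Longrightarrow>
      (\<And>x \<xi>. x \<in> unit_cube \<Longrightarrow> norm \<xi> = 1 \<Longrightarrow> L / K \<le> \<bar>h x\<bar> + norm (Dh x) + \<bar>(Hh x *v \<xi>) \<bullet> \<xi>\<bar>) \<Longrightarrow>
      t > 0 \<Longrightarrow> t \<le> L / (1536 * K\<^sup>2) \<Longrightarrow> t \<le> L / (16 * K) \<Longrightarrow>
      measure lebesgue {x \<in> unit_cube. \<bar>h x\<bar> \<le> t} \<le> C0 * (t / L)"
    using abs_sublevel_measure_le[OF assms K] by blast
  define c where "c = min (1 / (1536 * K\<^sup>2)) (1 / (16 * K))"
  have c: "c > 0" "c \<le> 1 / (1536 * K\<^sup>2)" "c \<le> 1 / (16 * K)" unfolding c_def using K by auto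
  show ?thesis
  proof (intro exI[of _ "max 1 (3 / c) + 3 * C0 * (4 * real CARD('k)) ^ CARD('k)"] conjI allI impI)
    show "max 1 (3 / c) + 3 * C0 * (4 * real CARD('k)) ^ CARD('k) > 0"
      using C0 by (simp add: add_pos_nonneg)
  qed (elim conjE, rule cov_num_fnbhd_Int_le[OF sublevel less_imp_le[OF C0] c], assumption+)
qed

end
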